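(* Let $X^*\in\mathbb{S}^n_{++}$ satisfy $\sum_{j=1}^k m^j_{X^*}Y_j+\big(\sum_{j=1}^k o^j_{X^*}\big)X^*=0$, let $\mathcal{S}=\{X\in\mathbb{S}^n_{++}:\|X\|=\|X^*\|\}$, and for $\hat X\in\mathcal{S}$ and $p\in\mathbb{Z}_{\ge0}$ let $b_{\hat X,p}=\|T_p(\hat X)\|/\|X^*\|$ (so that $T_p(\hat X)=b_{\hat X,p}\hat X'$ with $\hat X'\in\mathcal{S}$). Let $\mathcal{K}\subset\mathcal{S}$ be compact with $X^*\in\mathcal{K}$. Then there exist $I,L>0$ such that for all $\hat X\in\mathcal{K}$ and all integers $p\ge1$, $$|b_{\hat X,p}-1|\le\frac{L}{p}\|\hat X-X^*\|+\frac{I}{p^2}.$$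
   Context: $\mathbb{S}^n_{++}$ denotes the set of real symmetric positive definite $n\times n$ matrices and $\|\cdot\|$ the Frobenius norm. For $X,Y\in\mathbb{S}^n_{++}$ let $\alpha=\lambda_{\min}(YX^{-1})$, $\beta=\lambda_{\max}(YX^{-1})$. For $0<\alpha\le\beta$ and $t\in\mathbb{R}$ set $\varphi_{\alpha\beta}(t)=\frac{\beta^t-\alpha^t}{\beta-\alpha}$ and $\psi_{\alpha\beta}(t)=\frac{\beta\alpha^t-\alpha\beta^t}{\beta-\alpha}$ if $\beta>\alpha$, and $\varphi_{\alpha\beta}(t)=t\alpha^{t-1}$, $\psi_{\alpha\beta}(t)=(1-t)\alpha^t$ if $\beta=\alpha$. The Thompson geodesic is $X*_tY=\varphi_{\alpha\beta}(t)Y+\psi_{\alpha\beta}(t)X$. Fix $k\ge1$ and an ordered tuple $(Y_1,\dots,Y_k)$ in $\mathbb{S}^n_{++}$. For $i\in\mathbb{N}$ let $j(i)\in\{1,\dots,k\}$ with $j(i)\equiv i\pmod k$; $S_i(X)=X*_{\frac{1}{i+1}}Y_{j(i)}$, and for $p\in\mathbb{Z}_{\ge0}$, $T_p=S_{(p+1)k}\circ\cdots\circ S_{pk+1}$. For $1\le j\le k$ and $X\in\mathbb{S}^n_{++}$, with $\alpha=\lambda_{\min}(Y_jX^{-1})$, $\beta=\lambda_{\max}(Y_jX^{-1})$: $m^j_X=\frac{\log\beta-\log\alpha}{\beta-\alpha}$, $o^j_X=\frac{\beta\log\alpha-\alpha\log\beta}{\beta-\alpha}$ if $\beta>\alpha$,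 and $m^j_X=1/\alpha$, $o^j_X=\log\alpha-1$ if $\beta=\alpha$. *)

theory Defs
  imports "HOL-Analysis.Analysis"
begin

text \<open>Real n x n matrices are rendered as real^'n^'n (dimension = CARD('n)).
  The norm on this type is the Euclidean norm of the vector of all n^2 entries,
  i.e. the Frobenius norm.\<close>

definition spd :: "real^'n^'n \<Rightarrow> bool" where
  "spd A \<longleftrightarrow> transpose A = A \<and> (\<forall>x. x \<noteq> 0 \<longrightarrow> x \<bullet> (A *v x) > 0)"

definition eigenvalues_real :: "real^'n^'n \<Rightarrow> real set" where
  "eigenvalues_real A = {l. \<exists>v. v \<noteq> 0 \<and> A *v v = l *s v}"

definition lambda_min :: "real^'n^'n \<Rightarrow> real" where
  "lambda_min A = Min (eigenvalues_real A)"

definition lambda_max :: "real^'n^'n \<Rightarrow> real" where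
  "lambda_max A = Max (eigenvalues_real A)"

definition phi_ab :: "real \<Rightarrow> real \<Rightarrow> real \<Rightarrow> real" where
  "phi_ab a b t = (if b > a then (b powr t - a powr t) / (b - a) else t * a powr (t - 1))"

definition psi_ab :: "real \<Rightarrow> real \<Rightarrow> real \<Rightarrow> real" where
  "psi_ab a b t = (if b > a then (b * a powr t - a * b powr t) / (b - a) else (1 - t) * a powr t)"

definition thompson :: "real^'n^'n \<Rightarrow> real \<Rightarrow> real^'n^'n \<Rightarrow> real^'n^'n" where
  "thompson X t Y = (let a = lambda_min (Y ** matrix_inv X); b = lambda_max (Y ** matrix_inv X)
     in phi_ab a b t *\<^sub>R Y + psi_ab a b t *\<^sub>R X)"

text \<open>j(i) in {1..k} with j(i) = i mod k.\<close>
definition jidx :: "nat \<Rightarrow> nat \<Rightarrow> nat" where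
  "jidx k i = (i + k - 1) mod k + 1"

definition S_map :: "(nat \<Rightarrow> real^'n^'n) \<Rightarrow> nat \<Rightarrow> nat \<Rightarrow> real^'n^'n \<Rightarrow> real^'n^'n" where
  "S_map Ys k i X = thompson X (1 / (real i + 1)) (Ys (jidx k i))"

fun T_part :: "(nat \<Rightarrow> real^'n^'n) \<Rightarrow> nat \<Rightarrow> nat \<Rightarrow> nat \<Rightarrow> real^'n^'n \<Rightarrow> real^'n^'n" where
  "T_part Ys k p 0 X = X"
| "T_part Ys k p (Suc m) X = S_map Ys k (p * k + m + 1) (T_part Ys k p m X)"

definition T_map :: "(nat \<Rightarrow> real^'n^'n) \<Rightarrow> nat \<Rightarrow> nat \<Rightarrow> real^'n^'n \<Rightarrow> real^'n^'n" where
  "T_map Ys k p = T_part Ys k p k"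

definition m_coef :: "(nat \<Rightarrow> real^'n^'n) \<Rightarrow> nat \<Rightarrow> real^'n^'n \<Rightarrow> real" where
  "m_coef Ys j X = (let a = lambda_min (Ys j ** matrix_inv X); b = lambda_max (Ys j ** matrix_inv X)
     in if b > a then (ln b - ln a) / (b - a) else 1 / a)"

definition o_coef :: "(nat \<Rightarrow> real^'n^'n) \<Rightarrow> nat \<Rightarrow> real^'n^'n \<Rightarrow> real" where
  "o_coef Ys j X = (let a = lambda_min (Ys j ** matrix_inv X); b = lambda_max (Ys j ** matrix_inv X)
     in if b > a then (b * ln a - a * ln b) / (b - a) else ln a - 1)"

end

theory Submission
  imports Defs
begin

text \<open>
  Both the Thompson geodesic and the coefficients \<open>m\<close>, \<open>o\<close> are secant lines:
  \<open>X *\<^sub>t Y = \<phi> Y + \<psi> X\<close>, where \<open>\<phi> x + \<psi>\<close> is the secant of \<open>x \<mapsto> x\<^sup>t\<close> through \<open>\<alpha>\<close> and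
  \<open>\<beta>\<close>, and \<open>m x + o\<close> is the secant of \<open>ln\<close>. Since \<open>x\<^sup>t = 1 + t ln x + O(t\<^sup>2)\<close> uniformly
  on compact subsets of \<open>(0, \<infinity>)\<close>, we get \<open>X *\<^sub>t Y = X + t G\<^sub>Y(X) + O(t\<^sup>2)\<close> with
  \<open>G\<^sub>Y(X) = m Y + o X\<close>. On matrices that are uniformly positive definite and bounded,
  \<open>\<alpha>\<close> and \<open>\<beta>\<close> stay in a fixed compact subinterval of \<open>(0, \<infinity>)\<close> and are Lipschitz in \<open>X\<close>
  (they are extreme values of generalized Rayleigh quotients), so \<open>G\<^sub>Y\<close> is bounded and
  Lipschitz there. The iterates of one sweep \<open>T\<^sub>p\<close> stay in such a set and its step sizes
  \<open>1/(pk + i + 1)\<close> are \<open>1/(pk) + O(1/p\<^sup>2)\<close>, hence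
  \<open>T\<^sub>p(X) = X + (pk)\<^sup>-\<^sup>1 \<Sigma>\<^sub>j G\<^sub>Y\<^sub>j(X) + O(1/p\<^sup>2)\<close>. The sum vanishes at \<open>X\<^sup>*\<close> by hypothesis
  and is Lipschitz, and \<open>\<parallel>X\<parallel> = \<parallel>X\<^sup>*\<parallel>\<close> on \<open>K\<close>, which gives the bound.
\<close>

section \<open>Scalar estimates for the secant coefficients\<close>

lemma abs_exp_minus_one_le: "\<bar>exp (u::real) - 1\<bar> \<le> \<bar>u\<bar> * exp (max u 0)"
proof (cases "u \<ge> 0")
  case True
  have "1 - u \<le> exp (-u)" using exp_ge_add_one_self[of "-u"] by simp
  hence "exp u * (1 - u) \<le> exp u * exp (-u)" by (intro mult_left_mono) auto
  hence "exp u - u * exp u \<le> 1" by (simp add: exp_minus algebra_simps)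
  moreover have "exp u \<ge> 1" using True by simp
  ultimately show ?thesis using True by (simp add: max_def)
next
  case False
  have "1 + u \<le> exp u" using exp_ge_add_one_self[of u] by simp
  moreover have "exp u \<le> 1" using False by simp
  ultimately have "\<bar>exp u - 1\<bar> \<le> \<bar>u\<bar>" using False by linarith
  thus ?thesis using False by (simp add: max_def)
qed

lemma abs_powr_minus_one_le:
  fixes x t :: real
  assumes "x > 0" "0 \<le> t" "t \<le> 1"
  shows "\<bar>x powr t - 1\<bar> \<le> t * \<bar>ln x\<bar> * (1 + x)"
proof -
  have "exp (max (t * ln x) 0) \<le> 1 + x"
  proof (cases "ln x \<ge> 0")
    case True
    hence "t * ln x \<le> ln x" using assms by (simp add: mult_left_le_one_le)
    hence "exp (t * ln x) \<le> x" using assms by (metis exp_le_cancel_iff exp_ln)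
    moreover have "0 \<le> t * ln x" using True assms by simp
    ultimately show ?thesis using assms by (simp add: max_def)
  next
    case False
    hence "t * ln x \<le> 0" using assms by (simp add: mult_nonneg_nonpos)
    thus ?thesis using assms by (simp add: max_def)
  qed
  hence "\<bar>exp (t * ln x) - 1\<bar> \<le> \<bar>t * ln x\<bar> * (1 + x)"
    using abs_exp_minus_one_le[of "t * ln x"] by (meson abs_ge_zero mult_left_mono order_trans)
  thus ?thesis using assms by (simp add: powr_def abs_mult)
qed

definition powr_ln_const :: "real \<Rightarrow> real \<Rightarrow> real" where
  "powr_ln_const al be = (\<bar>ln al\<bar> + \<bar>ln be\<bar>) * (1 + be) / al"

lemma powr_ln_const_nonneg: "0 < al \<Longrightarrow> 0 \<le> be \<Longrightarrow> 0 \<le> powr_ln_const al be"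
  by (simp add: powr_ln_const_def)

lemma abs_ln_le_bounds: "0 < (al::real) \<Longrightarrow> al \<le> x \<Longrightarrow> x \<le> be \<Longrightarrow> \<bar>ln x\<bar> \<le> \<bar>ln al\<bar> + \<bar>ln be\<bar>"
  using ln_le_cancel_iff[of al x] ln_le_cancel_iff[of x be] by linarith

lemma powr_minus_ln_deriv_bound:
  assumes "0 < al" "al \<le> x" "x \<le> be" "0 \<le> t" "t \<le> 1"
  shows "\<bar>t * x powr (t - 1) - t / x\<bar> \<le> powr_ln_const al be * t^2"
proof -
  have x: "x > 0" using assms by linarith
  have "t * x powr (t - 1) - t / x = (t / x) * (x powr t - 1)"
    using x by (simp add: powr_diff field_simps)
  hence "\<bar>t * x powr (t - 1) - t / x\<bar> = (t / x) * \<bar>x powr t - 1\<bar>"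
    using x assms by (simp add: abs_mult)
  also have "\<dots> \<le> (t / x) * (t * \<bar>ln x\<bar> * (1 + x))"
    by (rule mult_left_mono[OF abs_powr_minus_one_le]) (use x assms in auto)
  also have "\<dots> \<le> (t / al) * (t * (\<bar>ln al\<bar> + \<bar>ln be\<bar>) * (1 + be))"
  proof (rule mult_mono)
    show "t / x \<le> t / al" using assms x by (simp add: frac_le)
    have "\<bar>ln x\<bar> * (1 + x) \<le> (\<bar>ln al\<bar> + \<bar>ln be\<bar>) * (1 + be)"
      by (rule mult_mono) (use abs_ln_le_bounds assms x in auto)
    thus "t * \<bar>ln x\<bar> * (1 + x) \<le> t * (\<bar>ln al\<bar> + \<bar>ln be\<bar>) * (1 + be)"
      using assms by (simp add: mult.assoc mult_left_mono)
  qed (use assms x in auto)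
  also have "\<dots> = powr_ln_const al be * t^2" by (simp add: powr_ln_const_def power2_eq_square)
  finally show ?thesis .
qed

lemma powr_minus_ln_lipschitz:
  assumes "0 < al" "al \<le> x" "x \<le> y" "y \<le> be" "0 \<le> t" "t \<le> 1"
  shows "\<bar>(y powr t - t * ln y) - (x powr t - t * ln x)\<bar> \<le> powr_ln_const al be * t^2 * (y - x)"
proof (cases "x = y")
  case False
  hence xy: "x < y" using assms by simp
  have "\<And>z. x \<le> z \<Longrightarrow> z \<le> y \<Longrightarrow>
      ((\<lambda>z. z powr t - t * ln z) has_real_derivative (t * z powr (t - 1) - t / z)) (at z)"
    using assms by (auto intro!: derivative_eq_intros simp: field_simps)
  from MVT2[OF xy this] obtain z where z: "x < z" "z < y"
    "(y powr t - t * ln y) - (x powr t - t * ln x) = (y - x) * (t * z powr (t - 1) - t / z)"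
    by blast
  have "\<bar>t * z powr (t - 1) - t / z\<bar> \<le> powr_ln_const al be * t^2"
    by (rule powr_minus_ln_deriv_bound) (use assms z in auto)
  thus ?thesis using z xy by (simp add: abs_mult mult.commute mult_left_mono)
qed simp

definition ln_secant_slope :: "real \<Rightarrow> real \<Rightarrow> real" where
  "ln_secant_slope a b = (if b > a then (ln b - ln a) / (b - a) else 1 / a)"

definition ln_secant_icept :: "real \<Rightarrow> real \<Rightarrow> real" where
  "ln_secant_icept a b = ln a - a * ln_secant_slope a b"

lemma psi_ab_eq: "a > 0 \<Longrightarrow> psi_ab a b t = a powr t - a * phi_ab a b t"
proof (cases "b > a")
  case True
  hence "psi_ab a b t = ((b - a) * a powr t - a * (b powr t - a powr t)) / (b - a)"
    by (simp add: psi_ab_def algebra_simps)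
  also have "\<dots> = a powr t - a * phi_ab a b t"
    using True by (simp add: phi_ab_def diff_divide_distrib right_diff_distrib)
  finally show ?thesis .
next
  case False
  assume "a > 0"
  hence "a * a powr (t - 1) = a powr t" by (simp add: powr_diff)
  thus ?thesis using False by (simp add: psi_ab_def phi_ab_def algebra_simps)
qed

lemma phi_ab_minus_ln_secant_slope:
  assumes "0 < al" "al \<le> a" "a \<le> b" "b \<le> be" "0 \<le> t" "t \<le> 1"
  shows "\<bar>phi_ab a b t - t * ln_secant_slope a b\<bar> \<le> powr_ln_const al be * t^2"
proof (cases "b > a")
  case True
  have "phi_ab a b t - t * ln_secant_slope a b
      = (b powr t - a powr t) / (b - a) - t * ((ln b - ln a) / (b - a))"
    using True by (simp add: phi_ab_def ln_secant_slope_def)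
  also have "\<dots> = ((b powr t - t * ln b) - (a powr t - t * ln a)) / (b - a)"
    by (simp add: diff_divide_distrib right_diff_distrib)
  finally have "phi_ab a b t - t * ln_secant_slope a b
      = ((b powr t - t * ln b) - (a powr t - t * ln a)) / (b - a)" .
  moreover have "\<bar>(b powr t - t * ln b) - (a powr t - t * ln a)\<bar> \<le> powr_ln_const al be * t^2 * (b - a)"
    by (rule powr_minus_ln_lipschitz) (use assms in auto)
  ultimately show ?thesis using True by (simp add: divide_le_eq)
next
  case False
  hence "b = a" using assms by simp
  thus ?thesis using powr_minus_ln_deriv_bound[of al a be t] assms
    by (simp add: phi_ab_def ln_secant_slope_def)
qed

lemma powr_minus_one_minus_ln:
  assumes "0 < al" "al \<le> 1" "1 \<le> be" "al \<le> a" "a \<le> be" "0 \<le> t" "t \<le> 1"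
  shows "\<bar>a powr t - 1 - t * ln a\<bar> \<le> powr_ln_const al be * t^2 * be"
proof -
  have C: "0 \<le> powr_ln_const al be * t^2" using assms by (simp add: powr_ln_const_nonneg)
  show ?thesis
  proof (cases "a \<le> 1")
    case True
    have "\<bar>(1 powr t - t * ln 1) - (a powr t - t * ln a)\<bar> \<le> powr_ln_const al be * t^2 * (1 - a)"
      by (rule powr_minus_ln_lipschitz) (use assms True in auto)
    moreover have "powr_ln_const al be * t^2 * (1 - a) \<le> powr_ln_const al be * t^2 * be"
      by (rule mult_left_mono) (use assms C in auto)
    ultimately show ?thesis by (simp add: abs_minus_commute)
  next
    case False
    have "\<bar>(a powr t - t * ln a) - (1 powr t - t * ln 1)\<bar> \<le> powr_ln_const al be * t^2 * (a - 1)"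
      by (rule powr_minus_ln_lipschitz) (use assms False in auto)
    moreover have "powr_ln_const al be * t^2 * (a - 1) \<le> powr_ln_const al be * t^2 * be"
      by (rule mult_left_mono) (use assms C in auto)
    ultimately show ?thesis by simp
  qed
qed

lemma psi_ab_minus_ln_secant_icept:
  assumes "0 < al" "al \<le> 1" "1 \<le> be" "al \<le> a" "a \<le> b" "b \<le> be" "0 \<le> t" "t \<le> 1"
  shows "\<bar>psi_ab a b t - 1 - t * ln_secant_icept a b\<bar> \<le> 2 * powr_ln_const al be * be * t^2"
proof -
  let ?C = "powr_ln_const al be"
  have "psi_ab a b t - 1 - t * ln_secant_icept a b
      = (a powr t - 1 - t * ln a) - a * (phi_ab a b t - t * ln_secant_slope a b)"
    using assms by (simp add: psi_ab_eq ln_secant_icept_def right_diff_distrib)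
  moreover have "\<bar>a powr t - 1 - t * ln a\<bar> \<le> ?C * t^2 * be"
    by (rule powr_minus_one_minus_ln) (use assms in auto)
  moreover have "\<bar>a * (phi_ab a b t - t * ln_secant_slope a b)\<bar> \<le> be * (?C * t^2)"
    unfolding abs_mult
    by (rule mult_mono) (use assms phi_ab_minus_ln_secant_slope[of al a b be t] in auto)
  ultimately show ?thesis
    using abs_triangle_ineq4[of "a powr t - 1 - t * ln a" "a * (phi_ab a b t - t * ln_secant_slope a b)"]
    by (simp add: algebra_simps)
qed

lemma phi_ab_nonneg_psi_ab_lower:
  assumes "0 < a" "a \<le> b" "0 \<le> t" "t \<le> 1"
  shows "phi_ab a b t \<ge> 0" "psi_ab a b t \<ge> (1 - t) * a powr t"
proof -
  have "phi_ab a b t \<ge> 0 \<and> a * phi_ab a b t \<le> t * a powr t"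
  proof (cases "b > a")
    case True
    have "\<And>x. a \<le> x \<Longrightarrow> x \<le> b \<Longrightarrow> ((\<lambda>x. x powr t) has_real_derivative t * x powr (t - 1)) (at x)"
      using assms by (auto intro!: derivative_eq_intros)
    from MVT2[OF True this] obtain z where z: "a < z" "z < b"
      "b powr t - a powr t = (b - a) * (t * z powr (t - 1))" by blast
    have "z powr (t - 1) \<le> a powr (t - 1)" by (rule powr_mono2') (use assms z in auto)
    hence "a * (t * z powr (t - 1)) \<le> a * (t * a powr (t - 1))"
      using assms by (intro mult_left_mono) auto
    also have "a * (t * a powr (t - 1)) = t * a powr t" using assms by (simp add: powr_diff)
    finally show ?thesis using True z assms by (simp add: phi_ab_def)
  next
    case False
    have "a * a powr (t - 1) = a powr t" using assms by (simp add: powr_diff)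
    hence h: "a * (t * a powr (t - 1)) = t * a powr t" by (metis mult.left_commute)
    have ph: "phi_ab a b t = t * a powr (t - 1)" using False by (simp add: phi_ab_def)
    have "0 \<le> t * a powr (t - 1)" using assms by simp
    thus ?thesis unfolding ph using h by linarith
  qed
  thus "phi_ab a b t \<ge> 0" "psi_ab a b t \<ge> (1 - t) * a powr t"
    using psi_ab_eq[of a b t] assms by (auto simp: algebra_simps)
qed

lemma ln_secant_slope_bounds:
  assumes "0 < al" "al \<le> a" "a \<le> b"
  shows "0 \<le> ln_secant_slope a b" "ln_secant_slope a b \<le> 1 / al"
proof -
  have "0 \<le> ln_secant_slope a b \<and> ln_secant_slope a b \<le> 1 / a"
  proof (cases "b > a")
    case True
    have "ln (b / a) \<le> b / a - 1" by (rule ln_le_minus_one) (use assms in auto)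
    hence "ln b - ln a \<le> (b - a) / a" using assms by (simp add: ln_div field_simps)
    moreover have "ln a \<le> ln b" using assms by simp
    ultimately show ?thesis using True by (simp add: ln_secant_slope_def divide_le_eq field_simps)
  qed (use assms in \<open>simp add: ln_secant_slope_def\<close>)
  moreover have "1 / a \<le> 1 / al" using assms by (simp add: frac_le)
  ultimately show "0 \<le> ln_secant_slope a b" "ln_secant_slope a b \<le> 1 / al" by auto
qed

definition ln_icept_bound :: "real \<Rightarrow> real \<Rightarrow> real" where
  "ln_icept_bound al be = \<bar>ln al\<bar> + \<bar>ln be\<bar> + be / al"

lemma abs_ln_secant_icept_le:
  assumes "0 < al" "al \<le> a" "a \<le> b" "b \<le> be"
  shows "\<bar>ln_secant_icept a b\<bar> \<le> ln_icept_bound al be"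
proof -
  have m: "0 \<le> ln_secant_slope a b" "ln_secant_slope a b \<le> 1 / al"
    using ln_secant_slope_bounds[of al a b] assms by auto
  have "a * ln_secant_slope a b \<le> be * (1 / al)" by (rule mult_mono) (use assms m in auto)
  moreover have "0 \<le> a * ln_secant_slope a b" using assms m by simp
  moreover have "\<bar>ln a\<bar> \<le> \<bar>ln al\<bar> + \<bar>ln be\<bar>" using abs_ln_le_bounds assms by simp
  ultimately show ?thesis unfolding ln_secant_icept_def ln_icept_bound_def
    using abs_triangle_ineq4[of "ln a" "a * ln_secant_slope a b"] by simp
qed

definition ln_divdiff :: "real \<Rightarrow> real \<Rightarrow> real" where
  "ln_divdiff x y = (if x = y then 1 / x else (ln y - ln x) / (y - x))"

lemma ln_divdiff_commute: "ln_divdiff x y = ln_divdiff y x"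
  unfolding ln_divdiff_def by (auto simp: field_simps)

lemma ln_secant_slope_eq_divdiff: "a \<le> b \<Longrightarrow> ln_secant_slope a b = ln_divdiff a b"
  unfolding ln_secant_slope_def ln_divdiff_def by auto

lemma ln_minus_linear_bounds:
  assumes "r > (0::real)"
  shows "0 \<le> (r - 1) - ln r" "(r - 1) - ln r \<le> (r - 1)^2 / r"
proof -
  show "0 \<le> (r - 1) - ln r" using ln_le_minus_one[OF assms] by simp
  have "ln (1 / r) \<le> 1 / r - 1" by (rule ln_le_minus_one) (use assms in auto)
  hence "(r - 1) - ln r \<le> (r - 1) + (1 / r - 1)" using assms by (simp add: ln_div)
  also have "\<dots> = (r - 1)^2 / r" using assms by (simp add: field_simps power2_eq_square)
  finally show "(r - 1) - ln r \<le> (r - 1)^2 / r" .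
qed

lemma ln_divdiff_deriv_bound:
  fixes a x :: real
  assumes "0 < a" "0 < x" "x \<noteq> a"
  shows "\<bar>((x - a) / x - (ln x - ln a)) / (x - a)^2\<bar> \<le> 1 / (a * x)"
proof -
  have r: "a / x > 0" using assms(1,2) by (rule divide_pos_pos)
  have "(x - a) / x - (ln x - ln a) = - ((a / x - 1) - ln (a / x))"
    using assms by (simp add: ln_div field_simps)
  hence "\<bar>(x - a) / x - (ln x - ln a)\<bar> \<le> (a / x - 1)^2 / (a / x)"
    using ln_minus_linear_bounds[OF r] by simp
  also have "\<dots> = (x - a)^2 / (a * x)" using assms by (simp add: field_simps power2_eq_square)
  finally have "\<bar>(x - a) / x - (ln x - ln a)\<bar> / (x - a)^2 \<le> ((x - a)^2 / (a * x)) / (x - a)^2"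
    by (rule divide_right_mono) simp
  thus ?thesis using assms by (simp add: abs_divide)
qed

lemma inverse_mult_le_inverse_square:
  "0 < (al::real) \<Longrightarrow> al \<le> a \<Longrightarrow> al \<le> x \<Longrightarrow> 1 / (a * x) \<le> 1 / al^2"
  using mult_mono[of al a al x] by (simp add: power2_eq_square frac_le)

lemma ln_divdiff_near_diagonal:
  assumes "0 < al" "al \<le> a" "al \<le> y"
  shows "\<bar>ln_divdiff a y - 1 / a\<bar> \<le> \<bar>y - a\<bar> / al^2"
proof (cases "y = a")
  case False
  have r: "y / a > 0" using assms by simp
  have "\<bar>ln (y / a) - (y / a - 1)\<bar> \<le> (y / a - 1)^2 / (y / a)"
    using ln_minus_linear_bounds[OF r] by linarith
  also have "\<dots> = (y - a)^2 / (a * y)" using assms by (simp add: field_simps power2_eq_square)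
  finally have "\<bar>ln (y / a) - (y / a - 1)\<bar> / \<bar>y - a\<bar> \<le> ((y - a)^2 / (a * y)) / \<bar>y - a\<bar>"
    by (rule divide_right_mono) simp
  moreover have "ln_divdiff a y - 1 / a = (ln (y / a) - (y / a - 1)) / (y - a)"
    using False assms by (simp add: ln_divdiff_def ln_div field_simps)
  moreover have "((y - a)^2 / (a * y)) / \<bar>y - a\<bar> = \<bar>y - a\<bar> * (1 / (a * y))"
  proof -
    have "(y - a)^2 = \<bar>y - a\<bar> * \<bar>y - a\<bar>" by (simp add: power2_eq_square)
    thus ?thesis using False assms by (simp add: field_simps)
  qed
  moreover have "\<bar>y - a\<bar> * (1 / (a * y)) \<le> \<bar>y - a\<bar> * (1 / al^2)"
    by (rule mult_left_mono) (use inverse_mult_le_inverse_square assms in auto)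
  ultimately show ?thesis by (simp add: abs_divide)
qed (simp add: ln_divdiff_def)

lemma ln_divdiff_lipschitz_away:
  assumes "0 < al" "al \<le> a" "al \<le> y" "y < z" "a \<notin> {y..z}"
  shows "\<bar>ln_divdiff a y - ln_divdiff a z\<bar> \<le> (z - y) / al^2"
proof -
  have na: "x \<noteq> a" if "y \<le> x" "x \<le> z" for x using assms(5) that by auto
  have "((\<lambda>x. (ln x - ln a) / (x - a)) has_real_derivative
      ((x - a) / x - (ln x - ln a)) / (x - a)^2) (at x)" if "y \<le> x" "x \<le> z" for x
    using na[OF that] that assms by (auto intro!: derivative_eq_intros simp: field_simps power2_eq_square)
  from MVT2[OF assms(4) this] obtain w where w: "y < w" "w < z"
    "(ln z - ln a) / (z - a) - (ln y - ln a) / (y - a)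
       = (z - y) * (((w - a) / w - (ln w - ln a)) / (w - a)^2)" by blast
  have "\<bar>((w - a) / w - (ln w - ln a)) / (w - a)^2\<bar> \<le> 1 / (a * w)"
    by (rule ln_divdiff_deriv_bound) (use w na assms in auto)
  also have "\<dots> \<le> 1 / al^2" by (rule inverse_mult_le_inverse_square) (use w assms in auto)
  finally have "(z - y) * \<bar>((w - a) / w - (ln w - ln a)) / (w - a)^2\<bar> \<le> (z - y) * (1 / al^2)"
    using assms(4) by (intro mult_left_mono) auto
  moreover have "ln_divdiff a y - ln_divdiff a z = - ((ln z - ln a) / (z - a) - (ln y - ln a) / (y - a))"
    using na[of y] na[of z] assms(4) by (simp add: ln_divdiff_def)
  ultimately show ?thesis using w(3) assms(4) by (simp add: abs_mult)
qed

text \<open>When the interval \<open>[y, z]\<close> contains the singular point \<open>a\<close> of the difference quotient,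
  compare both ends with the value \<open>1 / a\<close> at \<open>a\<close>.\<close>

lemma ln_divdiff_lipschitz_ordered:
  assumes "0 < al" "al \<le> a" "al \<le> y" "y \<le> z"
  shows "\<bar>ln_divdiff a y - ln_divdiff a z\<bar> \<le> (z - y) / al^2"
proof (cases "a \<in> {y..z}")
  case True
  have "\<bar>ln_divdiff a y - ln_divdiff a z\<bar> = \<bar>(ln_divdiff a y - 1 / a) - (ln_divdiff a z - 1 / a)\<bar>"
    by simp
  also have "\<dots> \<le> \<bar>ln_divdiff a y - 1 / a\<bar> + \<bar>ln_divdiff a z - 1 / a\<bar>"
    by (rule abs_triangle_ineq4)
  also have "\<dots> \<le> (a - y) / al^2 + (z - a) / al^2"
    using ln_divdiff_near_diagonal[of al a y] ln_divdiff_near_diagonal[of al a z] True assms by simp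
  also have "\<dots> = (z - y) / al^2" by (simp add: add_divide_distrib[symmetric])
  finally show ?thesis .
next
  case False
  thus ?thesis using ln_divdiff_lipschitz_away[of al a y z] assms by (cases "y = z") auto
qed

lemma ln_divdiff_lipschitz:
  assumes "0 < al" "al \<le> a" "al \<le> y" "al \<le> z"
  shows "\<bar>ln_divdiff a y - ln_divdiff a z\<bar> \<le> \<bar>y - z\<bar> / al^2"
  using ln_divdiff_lipschitz_ordered[of al a y z] ln_divdiff_lipschitz_ordered[of al a z y] assms
  by (cases "y \<le> z") (auto simp: abs_minus_commute)

lemma ln_secant_slope_lipschitz:
  assumes "0 < al" "al \<le> a" "a \<le> b" "al \<le> a'" "a' \<le> b'"
  shows "\<bar>ln_secant_slope a b - ln_secant_slope a' b'\<bar> \<le> (\<bar>a - a'\<bar> + \<bar>b - b'\<bar>) / al^2"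
proof -
  have "ln_secant_slope a b - ln_secant_slope a' b'
      = (ln_divdiff a b - ln_divdiff a b') + (ln_divdiff b' a - ln_divdiff b' a')"
    using assms by (simp add: ln_secant_slope_eq_divdiff ln_divdiff_commute[of a b'] ln_divdiff_commute[of a' b'])
  moreover have "\<bar>ln_divdiff a b - ln_divdiff a b'\<bar> \<le> \<bar>b - b'\<bar> / al^2"
    by (rule ln_divdiff_lipschitz) (use assms in auto)
  moreover have "\<bar>ln_divdiff b' a - ln_divdiff b' a'\<bar> \<le> \<bar>a - a'\<bar> / al^2"
    by (rule ln_divdiff_lipschitz) (use assms in auto)
  ultimately show ?thesis by (simp add: add_divide_distrib)
qed

lemma ln_lipschitz:
  assumes "0 < (al::real)" "al \<le> a" "al \<le> a'"
  shows "\<bar>ln a - ln a'\<bar> \<le> \<bar>a - a'\<bar> / al"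
proof -
  have "ln x - ln y \<le> \<bar>x - y\<bar> / al" if "al \<le> x" "al \<le> y" for x y
  proof -
    have "ln (x / y) \<le> x / y - 1" by (rule ln_le_minus_one) (use that assms in auto)
    hence "ln x - ln y \<le> (x - y) / y" using that assms by (simp add: ln_div diff_divide_distrib)
    also have "\<dots> \<le> \<bar>x - y\<bar> / y" by (rule divide_right_mono) (use that assms in auto)
    also have "\<dots> \<le> \<bar>x - y\<bar> / al" by (rule divide_left_mono) (use that assms in auto)
    finally show ?thesis .
  qed
  from this[of a a'] this[of a' a] show ?thesis using assms by (auto simp: abs_minus_commute)
qed

lemma ln_secant_icept_lipschitz:
  assumes "0 < al" "al \<le> a" "a \<le> b" "b \<le> be" "al \<le> a'" "a' \<le> b'" "b' \<le> be"
  shows "\<bar>ln_secant_icept a b - ln_secant_icept a' b'\<bar>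
    \<le> (2 / al + be / al^2) * (\<bar>a - a'\<bar> + \<bar>b - b'\<bar>)"
proof -
  let ?s = "ln_secant_slope" and ?d = "\<bar>a - a'\<bar> + \<bar>b - b'\<bar>"
  have "ln_secant_icept a b - ln_secant_icept a' b'
      = (ln a - ln a') - (a - a') * ?s a b - a' * (?s a b - ?s a' b')"
    by (simp add: ln_secant_icept_def algebra_simps)
  moreover have "\<bar>ln a - ln a'\<bar> \<le> ?d / al"
    using ln_lipschitz[of al a a'] assms by (smt (verit) divide_right_mono)
  moreover have "\<bar>(a - a') * ?s a b\<bar> \<le> ?d * (1 / al)"
    unfolding abs_mult using ln_secant_slope_bounds[of al a b] assms
    by (intro mult_mono) auto
  moreover have "\<bar>a' * (?s a b - ?s a' b')\<bar> \<le> be * (?d / al^2)"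
    unfolding abs_mult using ln_secant_slope_lipschitz[of al a b a' b'] assms
    by (intro mult_mono) auto
  ultimately have "\<bar>ln_secant_icept a b - ln_secant_icept a' b'\<bar> \<le> ?d / al + ?d * (1 / al) + be * (?d / al^2)"
    by (smt (verit) abs_triangle_ineq4 abs_triangle_ineq)
  also have "?d / al + ?d * (1 / al) + be * (?d / al^2) = (2 / al + be / al^2) * ?d"
    using assms by (simp add: field_simps)
  finally show ?thesis .
qed

section \<open>Generalized eigenvalues and Rayleigh quotients\<close>

lemma norm_matrix_vector_le: "norm ((A::real^'n^'m) *v x) \<le> norm A * norm x"
proof -
  have "norm (A *v x) = L2_set (\<lambda>i. \<bar>A $ i \<bullet> x\<bar>) UNIV"
    by (simp add: norm_vec_def matrix_vector_mult_def inner_vec_def mult.commute)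
  also have "\<dots> \<le> L2_set (\<lambda>i. norm (A $ i) * norm x) UNIV"
    by (rule L2_set_mono) (auto simp: Cauchy_Schwarz_ineq2)
  also have "\<dots> = norm x * L2_set (\<lambda>i. norm (A $ i)) UNIV"
    by (simp add: L2_set_right_distrib mult.commute)
  also have "\<dots> = norm A * norm x"
    by (simp only: norm_vec_def mult.commute)
  finally show ?thesis .
qed

lemma transpose_add: "transpose (A + B) = transpose A + transpose (B :: 'a::semiring_1^'n^'n)"
  by (simp add: transpose_def vec_eq_iff)

lemma transpose_diff: "transpose (A - B) = transpose A - transpose (B :: 'a::ring_1^'n^'n)"
  by (simp add: transpose_def vec_eq_iff)

lemma symmetric_inner_mult_commute:
  "transpose A = (A::real^'n^'n) \<Longrightarrow> x \<bullet> (A *v y) = y \<bullet> (A *v x)"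
  by (metis dot_lmul_matrix inner_commute vector_transpose_matrix)

definition quad_form :: "real^'n^'n \<Rightarrow> real^'n \<Rightarrow> real" where
  "quad_form A x = x \<bullet> (A *v x)"

lemma abs_quad_form_le: "\<bar>quad_form A x\<bar> \<le> norm A * (norm x)^2"
proof -
  have "\<bar>quad_form A x\<bar> \<le> norm x * norm (A *v x)"
    unfolding quad_form_def by (rule Cauchy_Schwarz_ineq2)
  also have "\<dots> \<le> norm x * (norm A * norm x)"
    by (rule mult_left_mono[OF norm_matrix_vector_le]) simp
  finally show ?thesis by (simp add: power2_eq_square algebra_simps)
qed

lemma quad_form_add: "quad_form (A + B) x = quad_form A x + quad_form B x"
  by (simp add: quad_form_def matrix_vector_mult_add_rdistrib inner_add_right)

lemma quad_form_diff: "quad_form (A - B) x = quad_form A x - quad_form B x"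
  by (simp add: quad_form_def matrix_vector_mult_diff_rdistrib inner_diff_right)

lemma quad_form_scaleR: "quad_form (c *\<^sub>R A) x = c * quad_form A x"
  by (simp add: quad_form_def scaleR_matrix_vector_assoc[symmetric])

lemma quad_form_scaleR_right: "quad_form A (c *\<^sub>R x) = c^2 * quad_form A x"
  by (simp add: quad_form_def matrix_vector_mult_scaleR power2_eq_square)

lemma quad_form_0_right [simp]: "quad_form A 0 = 0"
  by (simp add: quad_form_def)

lemma continuous_on_quad_form: "continuous_on S (\<lambda>p. quad_form (fst p) (snd p))"
  unfolding quad_form_def inner_vec_def matrix_vector_mult_def continuous_on_def
  by (auto intro!: tendsto_intros)

lemma continuous_on_quad_form_right: "continuous_on S (quad_form A)"
  unfolding quad_form_def
  by (intro continuous_on_inner continuous_on_id linear_continuous_on matrix_vector_mul_bounded_linear)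

lemma spd_quad_form_pos: "spd A \<Longrightarrow> x \<noteq> 0 \<Longrightarrow> quad_form A x > 0"
  by (simp add: spd_def quad_form_def)

lemma spd_quad_form_nonneg: "spd A \<Longrightarrow> quad_form A x \<ge> 0"
  by (cases "x = 0") (auto dest: spd_quad_form_pos[of A x])

lemma spd_mult_vector_eq_0: "spd X \<Longrightarrow> X *v x = 0 \<Longrightarrow> x = 0"
  using spd_quad_form_pos[of X x] by (auto simp: quad_form_def)

lemma spd_matrix_inv: "spd (X::real^'n^'n) \<Longrightarrow> X ** matrix_inv X = mat 1 \<and> matrix_inv X ** X = mat 1"
proof -
  assume "spd X"
  hence "invertible X"
    using spd_mult_vector_eq_0 invertible_left_inverse matrix_left_invertible_ker by blast
  thus ?thesis unfolding matrix_inv_def invertible_def by (rule someI_ex)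
qed

lemma compact_spd_uniformly_positive:
  fixes K :: "(real^'n^'n) set"
  assumes "compact K" "\<forall>X\<in>K. spd X"
  shows "\<exists>c>0. \<forall>X\<in>K. \<forall>x. c * (norm x)^2 \<le> quad_form X x"
proof (cases "K = {}")
  case False
  define S where "S = K \<times> sphere (0::real^'n) 1"
  have cS: "compact S" unfolding S_def by (intro compact_Times assms(1) compact_sphere)
  have "sphere (0::real^'n) 1 \<noteq> {}" using vector_choose_size[of 1] by auto
  hence nS: "S \<noteq> {}" using False by (simp add: S_def)
  from continuous_attains_inf[OF cS nS continuous_on_quad_form] obtain p0 where p0: "p0 \<in> S"
    "\<And>p. p \<in> S \<Longrightarrow> quad_form (fst p0) (snd p0) \<le> quad_form (fst p) (snd p)" by blast
  define c where "c = quad_form (fst p0) (snd p0)"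
  have "spd (fst p0)" "snd p0 \<noteq> 0" using p0(1) assms(2) by (auto simp: S_def)
  hence "c > 0" unfolding c_def by (rule spd_quad_form_pos)
  moreover have "c * (norm x)^2 \<le> quad_form X x" if "X \<in> K" for X x
  proof (cases "x = 0")
    case False
    define u where "u = (1 / norm x) *\<^sub>R x"
    have u: "(X, u) \<in> S" "x = norm x *\<^sub>R u" using False that by (auto simp: u_def S_def)
    have "c \<le> quad_form X u" using p0(2)[OF u(1)] by (simp add: c_def)
    hence "(norm x)^2 * c \<le> (norm x)^2 * quad_form X u" by (intro mult_left_mono) auto
    thus ?thesis by (subst (2) u(2)) (simp add: quad_form_scaleR_right algebra_simps)
  qed simp
  ultimately show ?thesis by blast
qed (intro exI[of _ 1], auto)

lemma eigenvalues_real_mult_matrix_inv: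
  assumes "spd (X::real^'n^'n)"
  shows "eigenvalues_real (Y ** matrix_inv X) = {l. \<exists>x. x \<noteq> 0 \<and> Y *v x = l *\<^sub>R (X *v x)}"
proof (intro set_eqI iffI)
  note inv = spd_matrix_inv[OF assms]
  fix l assume "l \<in> eigenvalues_real (Y ** matrix_inv X)"
  then obtain v where v: "v \<noteq> 0" "(Y ** matrix_inv X) *v v = l *s v"
    by (auto simp: eigenvalues_real_def)
  define x where "x = matrix_inv X *v v"
  have Xx: "X *v x = v" unfolding x_def by (simp add: matrix_vector_mul_assoc inv)
  hence "x \<noteq> 0" using v by auto
  moreover have "Y *v x = l *\<^sub>R (X *v x)"
    using v(2) Xx by (simp add: x_def matrix_vector_mul_assoc scalar_mult_eq_scaleR)
  ultimately show "l \<in> {l. \<exists>x. x \<noteq> 0 \<and> Y *v x = l *\<^sub>R (X *v x)}" by blast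
next
  note inv = spd_matrix_inv[OF assms]
  fix l assume "l \<in> {l. \<exists>x. x \<noteq> 0 \<and> Y *v x = l *\<^sub>R (X *v x)}"
  then obtain x where x: "x \<noteq> 0" "Y *v x = l *\<^sub>R (X *v x)" by blast
  have "(Y ** matrix_inv X) *v (X *v x) = Y *v ((matrix_inv X ** X) *v x)"
    by (simp add: matrix_vector_mul_assoc matrix_mul_assoc)
  hence "(Y ** matrix_inv X) *v (X *v x) = l *s (X *v x)"
    using x inv by (simp add: scalar_mult_eq_scaleR)
  moreover have "X *v x \<noteq> 0" using spd_mult_vector_eq_0[OF assms] x by auto
  ultimately show "l \<in> eigenvalues_real (Y ** matrix_inv X)"
    unfolding eigenvalues_real_def by blast
qed

lemma generalized_eigenvectors_orthogonal:
  assumes "transpose X = (X::real^'n^'n)" "transpose Y = Y"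
    "Y *v x = l *\<^sub>R (X *v x)" "Y *v y = m *\<^sub>R (X *v y)" "l \<noteq> m"
  shows "x \<bullet> (X *v y) = 0"
proof -
  have "m * (x \<bullet> (X *v y)) = x \<bullet> (Y *v y)" using assms(4) by simp
  also have "\<dots> = y \<bullet> (Y *v x)" by (rule symmetric_inner_mult_commute[OF assms(2)])
  also have "\<dots> = l * (x \<bullet> (X *v y))"
    using assms(3) symmetric_inner_mult_commute[OF assms(1), of y x] by simp
  finally show ?thesis using assms(5) by simp
qed

text \<open>Eigenvectors of distinct generalized eigenvalues are \<open>X\<close>-orthogonal, hence linearly
  independent, so there are at most \<open>n\<close> eigenvalues.\<close>

lemma finite_generalized_eigenvalues:
  assumes "spd (X::real^'n^'n)" "transpose Y = Y"
  shows "finite {l. \<exists>x. x \<noteq> 0 \<and> Y *v x = l *\<^sub>R (X *v x)}" (is "finite ?E")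
proof -
  define f where "f l = (SOME x. x \<noteq> 0 \<and> Y *v x = l *\<^sub>R (X *v x))" for l
  have f: "f l \<noteq> 0 \<and> Y *v f l = l *\<^sub>R (X *v f l)" if "l \<in> ?E" for l
  proof -
    have "\<exists>x. x \<noteq> 0 \<and> Y *v x = l *\<^sub>R (X *v x)" using that by blast
    from someI_ex[OF this] show ?thesis unfolding f_def .
  qed
  have tX: "transpose X = X" using assms(1) by (simp add: spd_def)
  have "inj_on f ?E"
  proof (rule inj_onI)
    fix l m assume lm: "l \<in> ?E" "m \<in> ?E" "f l = f m"
    have "l *\<^sub>R (X *v f l) = m *\<^sub>R (X *v f l)" using f[OF lm(1)] f[OF lm(2)] lm(3) by metis
    moreover have "X *v f l \<noteq> 0" using spd_mult_vector_eq_0[OF assms(1)] f[OF lm(1)] by auto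
    ultimately show "l = m" by (simp add: scaleR_cancel_right)
  qed
  moreover have "independent (f ` ?E)"
  proof
    assume "dependent (f ` ?E)"
    then obtain l where l: "l \<in> ?E" "f l \<in> span (f ` ?E - {f l})"
      unfolding dependent_def by blast
    have sub: "subspace {w. f l \<bullet> (X *v w) = 0}"
      by (auto simp: subspace_def matrix_vector_right_distrib inner_add_right matrix_vector_mult_scaleR)
    have "f ` ?E - {f l} \<subseteq> {w. f l \<bullet> (X *v w) = 0}"
    proof
      fix w assume w: "w \<in> f ` ?E - {f l}"
      then obtain m where m: "m \<in> ?E" "w = f m" by blast
      hence "l \<noteq> m" using w by auto
      thus "w \<in> {w. f l \<bullet> (X *v w) = 0}"
        using generalized_eigenvectors_orthogonal[OF tX assms(2), of "f l" l "f m" m]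
          f[OF l(1)] f[OF m(1)] m(2) by simp
    qed
    hence "f l \<in> {w. f l \<bullet> (X *v w) = 0}" using span_minimal[OF _ sub] l(2) by blast
    hence "quad_form X (f l) = 0" by (simp add: quad_form_def)
    thus False using spd_quad_form_pos[OF assms(1)] f[OF l(1)] by fastforce
  qed
  hence "finite (f ` ?E)" using independent_bound by blast
  ultimately show ?thesis using finite_imageD by blast
qed

lemma psd_quad_form_eq_0_imp:
  assumes "transpose A = (A::real^'n^'n)" "\<And>x. 0 \<le> quad_form A x" "quad_form A x0 = 0"
  shows "A *v x0 = 0"
proof (rule ccontr)
  define w where "w = A *v x0"
  assume "A *v x0 \<noteq> 0"
  hence W: "w \<bullet> w > 0" by (simp add: w_def)
  define q where "q = quad_form A w"
  define s where "s = (w \<bullet> w) / (\<bar>q\<bar> + 1)"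
  have s0: "s > 0" using W by (simp add: s_def)
  have "s * q \<le> s * \<bar>q\<bar>" using s0 by (simp add: mult_left_mono)
  also have "\<dots> < s * (\<bar>q\<bar> + 1)" using s0 by simp
  also have "\<dots> = w \<bullet> w" unfolding s_def by simp
  finally have sq: "s * (s * q) < s * (w \<bullet> w)" using s0 by simp
  have "x0 \<bullet> (A *v w) = w \<bullet> w"
    using symmetric_inner_mult_commute[OF assms(1), of x0 w] by (simp add: w_def)
  hence "quad_form A (x0 - s *\<^sub>R w) = s * (s * q) - 2 * (s * (w \<bullet> w))"
    using assms(3) by (simp add: quad_form_def q_def w_def matrix_vector_mult_diff_distrib
        matrix_vector_mult_scaleR inner_diff_left inner_diff_right algebra_simps)
  also have "\<dots> < 0" using sq mult_pos_pos[OF s0 W] by linarith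
  finally show False using assms(2)[of "x0 - s *\<^sub>R w"] by simp
qed

text \<open>The minimum of the generalized Rayleigh quotient \<open>x\<^sup>T Y x / x\<^sup>T X x\<close> is attained on the
  unit sphere, and a minimiser is a generalized eigenvector: \<open>Y - l0 X\<close> is positive
  semidefinite and vanishes on it.\<close>

lemma generalized_rayleigh_min:
  assumes X: "spd (X::real^'n^'n)" and tY: "transpose Y = Y"
  obtains x0 l0 where "x0 \<noteq> 0" "Y *v x0 = l0 *\<^sub>R (X *v x0)" "\<And>x. l0 * quad_form X x \<le> quad_form Y x"
proof -
  define r where "r x = quad_form Y x / quad_form X x" for x
  have S0: "x \<noteq> 0" if "x \<in> sphere 0 1" for x :: "real^'n" using that by auto
  have "continuous_on (sphere 0 1) r"
    unfolding r_def using spd_quad_form_pos[OF X] S0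
    by (intro continuous_on_divide continuous_on_quad_form_right) (metis less_irrefl)
  moreover have "sphere (0::real^'n) 1 \<noteq> {}" using vector_choose_size[of 1] by auto
  ultimately obtain x0 where x0: "x0 \<in> sphere 0 1" "\<And>y. y \<in> sphere 0 1 \<Longrightarrow> r x0 \<le> r y"
    using continuous_attains_inf[OF compact_sphere] by blast
  define l0 where "l0 = r x0"
  have qX0: "quad_form X x0 > 0" using spd_quad_form_pos[OF X S0[OF x0(1)]] .
  have all: "l0 * quad_form X x \<le> quad_form Y x" for x
  proof (cases "x = 0")
    case False
    define u where "u = (1 / norm x) *\<^sub>R x"
    have u: "u \<in> sphere 0 1" "x = norm x *\<^sub>R u" using False by (auto simp: u_def)
    have "l0 \<le> quad_form Y u / quad_form X u" using x0(2)[OF u(1)] by (simp add: l0_def r_def)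
    hence "l0 * quad_form X u \<le> quad_form Y u"
      using spd_quad_form_pos[OF X S0[OF u(1)]] by (simp add: le_divide_eq)
    hence "(norm x)^2 * (l0 * quad_form X u) \<le> (norm x)^2 * quad_form Y u"
      by (intro mult_left_mono) auto
    thus ?thesis by (subst (1 2) u(2)) (simp add: quad_form_scaleR_right algebra_simps)
  qed simp
  define A where "A = Y - l0 *\<^sub>R X"
  have "transpose A = A" using X tY by (simp add: A_def transpose_diff transpose_scalar spd_def)
  moreover have "0 \<le> quad_form A x" for x
    using all[of x] by (simp add: A_def quad_form_diff quad_form_scaleR)
  moreover have "quad_form A x0 = 0"
    using qX0 by (simp add: A_def quad_form_diff quad_form_scaleR l0_def r_def)
  ultimately have "A *v x0 = 0" by (rule psd_quad_form_eq_0_imp)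
  hence "Y *v x0 = l0 *\<^sub>R (X *v x0)"
    by (simp add: A_def matrix_vector_mult_diff_rdistrib scaleR_matrix_vector_assoc[symmetric])
  thus ?thesis using that S0[OF x0(1)] all by blast
qed

definition lmin :: "real^'n^'n \<Rightarrow> real^'n^'n \<Rightarrow> real" where
  "lmin Y X = lambda_min (Y ** matrix_inv X)"

definition lmax :: "real^'n^'n \<Rightarrow> real^'n^'n \<Rightarrow> real" where
  "lmax Y X = lambda_max (Y ** matrix_inv X)"

lemma lmin_rayleigh:
  assumes "spd (X::real^'n^'n)" "transpose Y = Y"
  shows "lmin Y X * quad_form X x \<le> quad_form Y x"
    and "\<exists>x. x \<noteq> 0 \<and> quad_form Y x = lmin Y X * quad_form X x"
proof -
  define E where "E = {l. \<exists>x. x \<noteq> 0 \<and> Y *v x = l *\<^sub>R (X *v x)}"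
  obtain x0 l0 where m: "x0 \<noteq> 0" "Y *v x0 = l0 *\<^sub>R (X *v x0)"
    "\<And>x. l0 * quad_form X x \<le> quad_form Y x"
    using generalized_rayleigh_min[OF assms] by blast
  have "Min E = l0"
  proof (rule Min_eqI)
    show "finite E" unfolding E_def by (rule finite_generalized_eigenvalues[OF assms])
    fix l assume "l \<in> E"
    then obtain x where x: "x \<noteq> 0" "Y *v x = l *\<^sub>R (X *v x)" by (auto simp: E_def)
    have "l0 * quad_form X x \<le> l * quad_form X x" using m(3)[of x] x(2) by (simp add: quad_form_def)
    thus "l0 \<le> l" using spd_quad_form_pos[OF assms(1) x(1)] by simp
  qed (use m in \<open>auto simp: E_def\<close>)
  hence l0: "lmin Y X = l0"
    by (simp add: lmin_def lambda_min_def eigenvalues_real_mult_matrix_inv[OF assms(1)] E_def)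
  show "lmin Y X * quad_form X x \<le> quad_form Y x" using m(3) l0 by simp
  show "\<exists>x. x \<noteq> 0 \<and> quad_form Y x = lmin Y X * quad_form X x"
    using m(1,2) l0 by (intro exI[of _ x0]) (simp add: quad_form_def)
qed

text \<open>The largest generalized eigenvalue of \<open>Y\<close> is minus the smallest one of \<open>-Y\<close>.\<close>

lemma lmax_rayleigh:
  assumes "spd (X::real^'n^'n)" "transpose Y = Y"
  shows "quad_form Y x \<le> lmax Y X * quad_form X x"
    and "\<exists>x. x \<noteq> 0 \<and> quad_form Y x = lmax Y X * quad_form X x"
proof -
  define E where "E = {l. \<exists>x. x \<noteq> 0 \<and> Y *v x = l *\<^sub>R (X *v x)}"
  have "transpose ((-1) *\<^sub>R Y) = (-1) *\<^sub>R Y" by (simp only: transpose_scalar assms(2))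
  then obtain x1 l1 where m: "x1 \<noteq> 0" "((-1) *\<^sub>R Y) *v x1 = l1 *\<^sub>R (X *v x1)"
    "\<And>x. l1 * quad_form X x \<le> quad_form ((-1) *\<^sub>R Y) x"
    using generalized_rayleigh_min[OF assms(1)] by blast
  have "(-1) *\<^sub>R (Y *v x1) = l1 *\<^sub>R (X *v x1)"
    using m(2) by (simp only: scaleR_matrix_vector_assoc)
  hence ev: "Y *v x1 = (- l1) *\<^sub>R (X *v x1)"
    by (metis add.inverse_inverse scaleR_minus1_left scaleR_minus_left)
  have up: "quad_form Y x \<le> (- l1) * quad_form X x" for x
    using m(3)[of x] unfolding quad_form_scaleR by simp
  have "Max E = - l1"
  proof (rule Max_eqI)
    show "finite E" unfolding E_def by (rule finite_generalized_eigenvalues[OF assms])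
    fix l assume "l \<in> E"
    then obtain x where x: "x \<noteq> 0" "Y *v x = l *\<^sub>R (X *v x)" by (auto simp: E_def)
    have "l * quad_form X x \<le> (- l1) * quad_form X x" using up[of x] x(2) by (simp add: quad_form_def)
    thus "l \<le> - l1" by (rule mult_right_le_imp_le) (rule spd_quad_form_pos[OF assms(1) x(1)])
  qed (use m(1) ev in \<open>auto simp: E_def\<close>)
  hence l1: "lmax Y X = - l1"
    by (simp add: lmax_def lambda_max_def eigenvalues_real_mult_matrix_inv[OF assms(1)] E_def)
  show "quad_form Y x \<le> lmax Y X * quad_form X x" using up l1 by simp
  show "\<exists>x. x \<noteq> 0 \<and> quad_form Y x = lmax Y X * quad_form X x"
    using m(1) ev l1 by (intro exI[of _ x1]) (simp add: quad_form_def)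
qed

lemma spd_symmetric: "spd A \<Longrightarrow> transpose A = A"
  by (simp add: spd_def)

lemma lmin_pos:
  assumes "spd (X::real^'n^'n)" "spd Y"
  shows "0 < lmin Y X"
proof -
  obtain x where "x \<noteq> 0" "quad_form Y x = lmin Y X * quad_form X x"
    using lmin_rayleigh(2)[OF assms(1) spd_symmetric[OF assms(2)]] by blast
  thus ?thesis using spd_quad_form_pos[OF assms(1)] spd_quad_form_pos[OF assms(2)]
    by (metis zero_less_mult_pos2)
qed

lemma lmin_le_lmax:
  assumes "spd (X::real^'n^'n)" "transpose Y = Y"
  shows "lmin Y X \<le> lmax Y X"
proof -
  obtain x where "x \<noteq> 0" "quad_form Y x = lmin Y X * quad_form X x"
    using lmin_rayleigh(2)[OF assms] by blast
  thus ?thesis using lmax_rayleigh(1)[OF assms, of x] spd_quad_form_pos[OF assms(1)] by simp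
qed

lemma lmin_lower_bound:
  assumes "spd (X::real^'n^'n)" "spd Y" "norm X \<le> M" "\<And>x. cY * (norm x)^2 \<le> quad_form Y x"
  shows "cY / M \<le> lmin Y X"
proof -
  obtain x where x: "x \<noteq> 0" "quad_form Y x = lmin Y X * quad_form X x"
    using lmin_rayleigh(2)[OF assms(1) spd_symmetric[OF assms(2)]] by blast
  have "quad_form X x \<le> norm X * (norm x)^2" using abs_quad_form_le[of X x] by linarith
  also have "\<dots> \<le> M * (norm x)^2" using assms(3) by (simp add: mult_right_mono)
  finally have qX: "quad_form X x \<le> M * (norm x)^2" .
  have "0 < M * (norm x)^2" using qX spd_quad_form_pos[OF assms(1) x(1)] by linarith
  hence M: "0 < M" by (simp add: zero_less_mult_iff)
  have "cY * (norm x)^2 \<le> lmin Y X * quad_form X x" using assms(4)[of x] x(2) by simp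
  also have "\<dots> \<le> lmin Y X * (M * (norm x)^2)"
    using qX lmin_pos[OF assms(1,2)] by (simp add: mult_left_mono)
  finally have "cY * (norm x)^2 \<le> (lmin Y X * M) * (norm x)^2" by (simp add: mult.assoc)
  hence "cY \<le> lmin Y X * M" using x(1) by (simp add: mult_le_cancel_right)
  thus ?thesis using M by (simp add: divide_le_eq)
qed

lemma lmax_upper_bound:
  assumes "spd (X::real^'n^'n)" "spd Y" "0 < c" "\<And>x. c * (norm x)^2 \<le> quad_form X x"
  shows "lmax Y X \<le> norm Y / c"
proof -
  obtain z where z: "z \<noteq> 0" "quad_form Y z = lmax Y X * quad_form X z"
    using lmax_rayleigh(2)[OF assms(1) spd_symmetric[OF assms(2)]] by blast
  have "0 \<le> lmax Y X"
    using lmin_pos[OF assms(1,2)] lmin_le_lmax[OF assms(1) spd_symmetric[OF assms(2)]] by simp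
  hence "lmax Y X * (c * (norm z)^2) \<le> lmax Y X * quad_form X z"
    by (intro mult_left_mono assms(4))
  also have "\<dots> \<le> norm Y * (norm z)^2" using z(2) abs_quad_form_le[of Y z] by simp
  finally have "lmax Y X * c \<le> norm Y" using z(1) by (simp add: algebra_simps)
  thus ?thesis using assms(3) by (simp add: le_divide_eq)
qed

lemma rayleigh_perturbation:
  fixes d lam q q' c n D A :: real
  assumes "0 < c" "0 < n" "c * n \<le> q'" "d * q' \<le> lam * \<bar>q - q'\<bar>" "\<bar>q - q'\<bar> \<le> n * D"
    "0 \<le> lam" "lam \<le> A"
  shows "d \<le> A / c * D"
proof (cases "d \<le> 0")
  case True
  have "0 \<le> D" using assms(2,5) by (smt (verit) mult_pos_neg)
  moreover have "0 \<le> A" using assms(6,7) by linarith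
  ultimately have "0 \<le> A / c * D" using assms(1) by simp
  thus ?thesis using True by linarith
next
  case False
  have "d * (c * n) \<le> d * q'" using False assms by (intro mult_left_mono) auto
  also have "\<dots> \<le> A * (n * D)" using assms by (meson abs_ge_zero mult_mono order_trans)
  finally have "d * c \<le> A * D" using assms(2) by (simp add: algebra_simps)
  thus ?thesis using assms(1) by (simp add: le_divide_eq algebra_simps)
qed

lemma lmin_lmax_lipschitz_onesided:
  fixes X X' Y :: "real^'n^'n"
  assumes X: "spd X" "\<And>x. c * (norm x)^2 \<le> quad_form X x"
    and X': "spd X'" "\<And>x. c * (norm x)^2 \<le> quad_form X' x"
    and Y: "spd Y" and c: "0 < c"
  shows "lmin Y X' - lmin Y X \<le> norm Y / c / c * norm (X - X')"
    and "lmax Y X - lmax Y X' \<le> norm Y / c / c * norm (X - X')"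
proof -
  have tY: "transpose Y = Y" using Y by (rule spd_symmetric)
  have bounds: "0 \<le> lmin Y X" "lmin Y X \<le> lmax Y X" "lmax Y X \<le> norm Y / c"
    using lmin_pos[OF X(1) Y] lmin_le_lmax[OF X(1) tY] lmax_upper_bound[OF X(1) Y c X(2)] by auto
  have diff: "\<bar>quad_form X x - quad_form X' x\<bar> \<le> (norm x)^2 * norm (X - X')" for x
    using abs_quad_form_le[of "X - X'" x] by (simp add: quad_form_diff mult.commute)
  obtain x where x: "x \<noteq> 0" "quad_form Y x = lmin Y X * quad_form X x"
    using lmin_rayleigh(2)[OF X(1) tY] by blast
  show "lmin Y X' - lmin Y X \<le> norm Y / c / c * norm (X - X')"
  proof (rule rayleigh_perturbation[OF c _ X'(2) _ diff])
    have "(lmin Y X' - lmin Y X) * quad_form X' x \<le> lmin Y X * (quad_form X x - quad_form X' x)"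
      using lmin_rayleigh(1)[OF X'(1) tY, of x] x(2) by (simp add: algebra_simps)
    also have "\<dots> \<le> lmin Y X * \<bar>quad_form X x - quad_form X' x\<bar>"
      using bounds by (intro mult_left_mono) auto
    finally show "(lmin Y X' - lmin Y X) * quad_form X' x \<le> lmin Y X * \<bar>quad_form X x - quad_form X' x\<bar>" .
  qed (use x bounds in auto)
  obtain z where z: "z \<noteq> 0" "quad_form Y z = lmax Y X * quad_form X z"
    using lmax_rayleigh(2)[OF X(1) tY] by blast
  show "lmax Y X - lmax Y X' \<le> norm Y / c / c * norm (X - X')"
  proof (rule rayleigh_perturbation[OF c _ X'(2) _ diff])
    have "(lmax Y X - lmax Y X') * quad_form X' z \<le> lmax Y X * (quad_form X' z - quad_form X z)"
      using lmax_rayleigh(1)[OF X'(1) tY, of z] z(2) by (simp add: algebra_simps)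
    also have "\<dots> \<le> lmax Y X * \<bar>quad_form X z - quad_form X' z\<bar>"
      using bounds by (intro mult_left_mono) auto
    finally show "(lmax Y X - lmax Y X') * quad_form X' z \<le> lmax Y X * \<bar>quad_form X z - quad_form X' z\<bar>" .
  qed (use z bounds in auto)
qed

lemma lmin_lmax_lipschitz:
  fixes X X' Y :: "real^'n^'n"
  assumes "spd X" "\<And>x. c * (norm x)^2 \<le> quad_form X x"
    and "spd X'" "\<And>x. c * (norm x)^2 \<le> quad_form X' x"
    and "spd Y" "0 < c"
  shows "\<bar>lmin Y X - lmin Y X'\<bar> \<le> norm Y / c / c * norm (X - X')"
    and "\<bar>lmax Y X - lmax Y X'\<bar> \<le> norm Y / c / c * norm (X - X')"
  using lmin_lmax_lipschitz_onesided[OF assms] lmin_lmax_lipschitz_onesided[OF assms(3,4,1,2,5,6)]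
  by (auto simp: norm_minus_commute)

section \<open>The Thompson geodesic near \<open>t = 0\<close>\<close>

lemma thompson_eq:
  "thompson X t Y = phi_ab (lmin Y X) (lmax Y X) t *\<^sub>R Y + psi_ab (lmin Y X) (lmax Y X) t *\<^sub>R X"
  by (simp add: thompson_def lmin_def lmax_def Let_def)

text \<open>The velocity \<open>G\<^sub>Y(X) = m Y + o X\<close> of the geodesic \<open>t \<mapsto> X *\<^sub>t Y\<close> at \<open>t = 0\<close>.\<close>

definition thompson_velocity :: "real^'n^'n \<Rightarrow> real^'n^'n \<Rightarrow> real^'n^'n" where
  "thompson_velocity Y X = ln_secant_slope (lmin Y X) (lmax Y X) *\<^sub>R Y
     + ln_secant_icept (lmin Y X) (lmax Y X) *\<^sub>R X"

lemma ln_secant_icept_eq: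
  assumes "a \<noteq> 0"
  shows "ln_secant_icept a b = (if b > a then (b * ln a - a * ln b) / (b - a) else ln a - 1)"
proof (cases "b > a")
  case True
  hence "ln a - a * ((ln b - ln a) / (b - a)) = ((b - a) * ln a - a * (ln b - ln a)) / (b - a)"
    by (simp add: field_simps)
  also have "(b - a) * ln a - a * (ln b - ln a) = b * ln a - a * ln b" by (simp add: algebra_simps)
  finally show ?thesis using True by (simp add: ln_secant_icept_def ln_secant_slope_def)
qed (use assms in \<open>simp add: ln_secant_icept_def ln_secant_slope_def\<close>)

lemma thompson_velocity_eq_coef:
  assumes "spd X" "spd (Ys j)"
  shows "thompson_velocity (Ys j) X = m_coef Ys j X *\<^sub>R Ys j + o_coef Ys j X *\<^sub>R X"
  using lmin_pos[OF assms]
  by (simp add: thompson_velocity_def ln_secant_icept_eq m_coef_def o_coef_def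
      ln_secant_slope_def lmin_def lmax_def Let_def)

lemma norm_scaleR_add_le: "norm (p *\<^sub>R A + q *\<^sub>R B) \<le> \<bar>p\<bar> * norm A + \<bar>q\<bar> * norm B"
  using norm_triangle_ineq[of "p *\<^sub>R A" "q *\<^sub>R B"] by simp

lemma thompson_expansion:
  fixes X Y :: "real^'n^'n"
  assumes "0 < al" "al \<le> 1" "1 \<le> be" "al \<le> lmin Y X" "lmin Y X \<le> lmax Y X" "lmax Y X \<le> be"
    and "0 \<le> t" "t \<le> 1"
  shows "norm (thompson X t Y - X - t *\<^sub>R thompson_velocity Y X)
    \<le> powr_ln_const al be * (norm Y + 2 * be * norm X) * t^2"
proof -
  let ?a = "lmin Y X" and ?b = "lmax Y X" and ?C = "powr_ln_const al be"
  have "thompson X t Y - X - t *\<^sub>R thompson_velocity Y X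
      = (phi_ab ?a ?b t - t * ln_secant_slope ?a ?b) *\<^sub>R Y
        + (psi_ab ?a ?b t - 1 - t * ln_secant_icept ?a ?b) *\<^sub>R X"
    by (simp add: thompson_eq thompson_velocity_def algebra_simps)
  hence "norm (thompson X t Y - X - t *\<^sub>R thompson_velocity Y X)
      \<le> \<bar>phi_ab ?a ?b t - t * ln_secant_slope ?a ?b\<bar> * norm Y
        + \<bar>psi_ab ?a ?b t - 1 - t * ln_secant_icept ?a ?b\<bar> * norm X"
    using norm_scaleR_add_le by metis
  also have "\<dots> \<le> (?C * t^2) * norm Y + (2 * ?C * be * t^2) * norm X"
    using phi_ab_minus_ln_secant_slope[of al ?a ?b be t] psi_ab_minus_ln_secant_icept[of al be ?a ?b t]
      assms by (intro add_mono mult_right_mono) auto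
  also have "\<dots> = ?C * (norm Y + 2 * be * norm X) * t^2" by (simp add: algebra_simps)
  finally show ?thesis .
qed

lemma norm_thompson_velocity_le:
  assumes "0 < al" "al \<le> lmin Y X" "lmin Y X \<le> lmax Y X" "lmax Y X \<le> be"
  shows "norm (thompson_velocity Y X) \<le> norm Y / al + ln_icept_bound al be * norm X"
proof -
  let ?a = "lmin Y X" and ?b = "lmax Y X"
  have "norm (thompson_velocity Y X)
      \<le> \<bar>ln_secant_slope ?a ?b\<bar> * norm Y + \<bar>ln_secant_icept ?a ?b\<bar> * norm X"
    unfolding thompson_velocity_def by (rule norm_scaleR_add_le)
  also have "\<dots> \<le> (1 / al) * norm Y + ln_icept_bound al be * norm X"
    using ln_secant_slope_bounds[of al ?a ?b] abs_ln_secant_icept_le[of al ?a ?b be] assms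
    by (intro add_mono mult_right_mono) auto
  finally show ?thesis by simp
qed

lemma powr_ge_lower: "0 < al \<Longrightarrow> al \<le> 1 \<Longrightarrow> al \<le> a \<Longrightarrow> 0 \<le> t \<Longrightarrow> t \<le> 1 \<Longrightarrow> al \<le> a powr (t::real)"
proof -
  assume h: "0 < al" "al \<le> 1" "al \<le> a" "0 \<le> t" "t \<le> 1"
  show ?thesis
  proof (cases "a \<ge> 1")
    case True thus ?thesis using ge_one_powr_ge_zero[of a t] h by linarith
  next
    case False
    have "a powr 1 \<le> a powr t" by (rule powr_mono') (use h False in auto)
    thus ?thesis using h by simp
  qed
qed

lemma thompson_quad_form_lower:
  assumes "spd X" "spd Y" "0 < al" "al \<le> 1" "al \<le> lmin Y X" "lmin Y X \<le> lmax Y X"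
    and "0 \<le> t" "t \<le> 1/2"
  shows "al / 2 * quad_form X x \<le> quad_form (thompson X t Y) x"
proof -
  let ?a = "lmin Y X" and ?b = "lmax Y X"
  have pp: "0 \<le> phi_ab ?a ?b t" "(1 - t) * ?a powr t \<le> psi_ab ?a ?b t"
    using phi_ab_nonneg_psi_ab_lower[of ?a ?b t] assms by auto
  have "1 / 2 * al \<le> (1 - t) * ?a powr t"
    using powr_ge_lower[of al ?a t] assms by (intro mult_mono) auto
  hence "al / 2 * quad_form X x \<le> psi_ab ?a ?b t * quad_form X x"
    using pp spd_quad_form_nonneg[OF assms(1)] by (intro mult_right_mono) auto
  also have "\<dots> \<le> phi_ab ?a ?b t * quad_form Y x + psi_ab ?a ?b t * quad_form X x"
    using pp spd_quad_form_nonneg[OF assms(2)] by simp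
  also have "\<dots> = quad_form (thompson X t Y) x"
    by (simp add: thompson_eq quad_form_add quad_form_scaleR)
  finally show ?thesis .
qed

lemma thompson_symmetric:
  "transpose X = X \<Longrightarrow> transpose Y = Y \<Longrightarrow> transpose (thompson X t Y) = thompson X t Y"
  by (simp add: thompson_eq transpose_add transpose_scalar)

lemma spd_thompson:
  fixes X Y :: "real^'n^'n"
  assumes "spd X" "spd Y" "0 < c" "\<And>x. c * (norm x)^2 \<le> quad_form X x"
    and "0 < al" "al \<le> 1" "al \<le> lmin Y X" "lmin Y X \<le> lmax Y X" "0 \<le> t" "t \<le> 1/2"
  shows "c * al / 2 * (norm x)^2 \<le> quad_form (thompson X t Y) x" and "spd (thompson X t Y)"
proof -
  have lower: "c * al / 2 * (norm x)^2 \<le> quad_form (thompson X t Y) x" for x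
  proof -
    have "c * al / 2 * (norm x)^2 = al / 2 * (c * (norm x)^2)" by simp
    also have "\<dots> \<le> al / 2 * quad_form X x" using assms(4,5) by (intro mult_left_mono) auto
    also have "\<dots> \<le> quad_form (thompson X t Y) x" by (rule thompson_quad_form_lower) (use assms in auto)
    finally show ?thesis .
  qed
  thus "c * al / 2 * (norm x)^2 \<le> quad_form (thompson X t Y) x" .
  show "spd (thompson X t Y)"
    unfolding spd_def
  proof (intro conjI allI impI)
    show "transpose (thompson X t Y) = thompson X t Y"
      using assms(1,2) by (intro thompson_symmetric) (auto simp: spd_def)
    fix x :: "real^'n" assume "x \<noteq> 0"
    hence "0 < c * al / 2 * (norm x)^2" using assms(3,5) by simp
    thus "0 < x \<bullet> (thompson X t Y *v x)" using lower[of x] by (simp add: quad_form_def)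
  qed
qed

lemma thompson_velocity_lipschitz:
  fixes X X' Y :: "real^'n^'n"
  assumes "0 < al" "al \<le> lmin Y X" "lmin Y X \<le> lmax Y X" "lmax Y X \<le> be"
    and "al \<le> lmin Y X'" "lmin Y X' \<le> lmax Y X'" "lmax Y X' \<le> be"
    and "\<bar>lmin Y X - lmin Y X'\<bar> \<le> La * norm (X - X')" "\<bar>lmax Y X - lmax Y X'\<bar> \<le> La * norm (X - X')"
  shows "norm (thompson_velocity Y X - thompson_velocity Y X')
    \<le> (2 * La / al^2 * norm Y + (2 / al + be / al^2) * (2 * La) * norm X + ln_icept_bound al be)
      * norm (X - X')"
proof -
  let ?a = "lmin Y X" and ?b = "lmax Y X" and ?a' = "lmin Y X'" and ?b' = "lmax Y X'"
  let ?D = "norm (X - X')"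
  have d: "\<bar>?a - ?a'\<bar> + \<bar>?b - ?b'\<bar> \<le> 2 * La * ?D" using assms(8,9) by simp
  have ds: "\<bar>ln_secant_slope ?a ?b - ln_secant_slope ?a' ?b'\<bar> \<le> 2 * La / al^2 * ?D"
    using ln_secant_slope_lipschitz[of al ?a ?b ?a' ?b'] divide_right_mono[OF d, of "al^2"] assms
    by simp
  have "\<bar>ln_secant_icept ?a ?b - ln_secant_icept ?a' ?b'\<bar>
      \<le> (2 / al + be / al^2) * (\<bar>?a - ?a'\<bar> + \<bar>?b - ?b'\<bar>)"
    by (rule ln_secant_icept_lipschitz) (use assms in auto)
  also have "\<dots> \<le> (2 / al + be / al^2) * (2 * La) * ?D"
    using d assms by (simp add: mult.assoc mult_left_mono)
  finally have di: "\<bar>ln_secant_icept ?a ?b - ln_secant_icept ?a' ?b'\<bar> \<le> (2 / al + be / al^2) * (2 * La) * ?D" .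
  have eq: "thompson_velocity Y X - thompson_velocity Y X'
      = ((ln_secant_slope ?a ?b - ln_secant_slope ?a' ?b') *\<^sub>R Y
         + (ln_secant_icept ?a ?b - ln_secant_icept ?a' ?b') *\<^sub>R X)
        + ln_secant_icept ?a' ?b' *\<^sub>R (X - X')"
    by (simp add: thompson_velocity_def algebra_simps)
  have "norm (thompson_velocity Y X - thompson_velocity Y X')
      \<le> norm ((ln_secant_slope ?a ?b - ln_secant_slope ?a' ?b') *\<^sub>R Y
         + (ln_secant_icept ?a ?b - ln_secant_icept ?a' ?b') *\<^sub>R X)
        + norm (ln_secant_icept ?a' ?b' *\<^sub>R (X - X'))"
    unfolding eq by (rule norm_triangle_ineq)
  also have "\<dots> \<le> (\<bar>ln_secant_slope ?a ?b - ln_secant_slope ?a' ?b'\<bar> * norm Y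
         + \<bar>ln_secant_icept ?a ?b - ln_secant_icept ?a' ?b'\<bar> * norm X)
        + \<bar>ln_secant_icept ?a' ?b'\<bar> * ?D"
    by (intro add_mono norm_scaleR_add_le) simp
  also have "\<dots> \<le> (2 * La / al^2 * ?D * norm Y + (2 / al + be / al^2) * (2 * La) * ?D * norm X)
      + ln_icept_bound al be * ?D"
    using ds di abs_ln_secant_icept_le[of al ?a' ?b' be] assms
    by (intro add_mono mult_right_mono) auto
  finally show ?thesis by (simp add: algebra_simps)
qed

definition spd_within :: "real \<Rightarrow> real \<Rightarrow> real^'n^'n \<Rightarrow> bool" where
  "spd_within c M X \<longleftrightarrow> spd X \<and> (\<forall>x. c * (norm x)^2 \<le> quad_form X x) \<and> norm X \<le> M"

lemma spd_within_mono: "spd_within c M X \<Longrightarrow> c' \<le> c \<Longrightarrow> M \<le> M' \<Longrightarrow> spd_within c' M' X"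
  unfolding spd_within_def by (meson mult_right_mono order_trans zero_le_power2)

lemma family_spectral_bounds:
  fixes Ys :: "nat \<Rightarrow> real^'n^'n"
  assumes "finite J" "\<forall>j\<in>J. spd (Ys j)" "0 < c" "0 < M"
  obtains al be where "0 < al" "al \<le> 1" "1 \<le> be"
    "\<And>j (X::real^'n^'n). j \<in> J \<Longrightarrow> spd_within c M X \<Longrightarrow>
      al \<le> lmin (Ys j) X \<and> lmin (Ys j) X \<le> lmax (Ys j) X \<and> lmax (Ys j) X \<le> be"
proof -
  obtain cY where cY: "cY > 0" "\<forall>Y\<in>Ys ` J. \<forall>x. cY * (norm x)^2 \<le> quad_form Y x"
    using compact_spd_uniformly_positive[of "Ys ` J"] assms(1,2) finite_imp_compact by blast
  define MY where "MY = (\<Sum>j\<in>J. norm (Ys j))"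
  show ?thesis
  proof (rule that[of "min 1 (cY / M)" "max 1 (MY / c)"])
    fix j and X :: "real^'n^'n" assume j: "j \<in> J" and X: "spd_within c M X"
    have Y: "spd (Ys j)" using assms(2) j by blast
    have "cY / M \<le> lmin (Ys j) X"
      using lmin_lower_bound[of X "Ys j" M cY] X Y cY(2) j by (auto simp: spd_within_def)
    moreover have "lmin (Ys j) X \<le> lmax (Ys j) X"
      using lmin_le_lmax X Y spd_symmetric by (auto simp: spd_within_def)
    moreover have "lmax (Ys j) X \<le> norm (Ys j) / c"
      using lmax_upper_bound[of X "Ys j" c] X Y assms(3) by (auto simp: spd_within_def)
    moreover have "norm (Ys j) / c \<le> MY / c"
      using member_le_sum[of j J "\<lambda>j. norm (Ys j)"] j assms(1,3) by (simp add: MY_def divide_right_mono)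
    ultimately show "min 1 (cY / M) \<le> lmin (Ys j) X \<and> lmin (Ys j) X \<le> lmax (Ys j) X
        \<and> lmax (Ys j) X \<le> max 1 (MY / c)" by linarith
  qed (use cY assms in auto)
qed

lemma thompson_family_expansion:
  fixes Ys :: "nat \<Rightarrow> real^'n^'n"
  assumes "finite J" "\<forall>j\<in>J. spd (Ys j)" "0 < c" "0 < M"
  obtains Ce Bg where "0 \<le> Ce" "0 \<le> Bg"
    "\<And>j (X::real^'n^'n) (t::real). j \<in> J \<Longrightarrow> spd_within c M X \<Longrightarrow> 0 \<le> t \<Longrightarrow> t \<le> 1 \<Longrightarrow>
      norm (thompson X t (Ys j) - X - t *\<^sub>R thompson_velocity (Ys j) X) \<le> Ce * t^2"
    "\<And>j (X::real^'n^'n). j \<in> J \<Longrightarrow> spd_within c M X \<Longrightarrow> norm (thompson_velocity (Ys j) X) \<le> Bg"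
proof -
  obtain al be where ab: "0 < al" "al \<le> 1" "1 \<le> be"
    "\<And>j (X::real^'n^'n). j \<in> J \<Longrightarrow> spd_within c M X \<Longrightarrow>
      al \<le> lmin (Ys j) X \<and> lmin (Ys j) X \<le> lmax (Ys j) X \<and> lmax (Ys j) X \<le> be"
    using family_spectral_bounds[OF assms] by blast
  define MY where "MY = (\<Sum>j\<in>J. norm (Ys j))"
  have MY: "norm (Ys j) \<le> MY" if "j \<in> J" for j
    using member_le_sum[of j J "\<lambda>j. norm (Ys j)"] that assms(1) by (simp add: MY_def)
  let ?C = "powr_ln_const al be" and ?O = "ln_icept_bound al be"
  have C0: "0 \<le> ?C" using ab by (simp add: powr_ln_const_nonneg)
  have O0: "0 \<le> ?O" using ab by (simp add: ln_icept_bound_def)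
  show ?thesis
  proof (rule that[of "?C * (MY + 2 * be * M)" "MY / al + ?O * M"])
    fix j and X :: "real^'n^'n" and t :: real
    assume j: "j \<in> J" and X: "spd_within c M X" and t: "0 \<le> t" "t \<le> 1"
    have "norm (thompson X t (Ys j) - X - t *\<^sub>R thompson_velocity (Ys j) X)
        \<le> ?C * (norm (Ys j) + 2 * be * norm X) * t^2"
      using thompson_expansion[of al be "Ys j" X t] ab(1-3) ab(4)[OF j X] t by blast
    also have "\<dots> \<le> ?C * (MY + 2 * be * M) * t^2"
      using MY[OF j] X ab C0 by (intro mult_right_mono mult_left_mono add_mono) (auto simp: spd_within_def)
    finally show "norm (thompson X t (Ys j) - X - t *\<^sub>R thompson_velocity (Ys j) X)
        \<le> ?C * (MY + 2 * be * M) * t^2" .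
  next
    fix j and X :: "real^'n^'n" assume j: "j \<in> J" and X: "spd_within c M X"
    have "norm (thompson_velocity (Ys j) X) \<le> norm (Ys j) / al + ?O * norm X"
      using norm_thompson_velocity_le[of al "Ys j" X be] ab(1) ab(4)[OF j X] by blast
    also have "\<dots> \<le> MY / al + ?O * M"
      using MY[OF j] X ab O0 by (intro add_mono divide_right_mono mult_left_mono) (auto simp: spd_within_def)
    finally show "norm (thompson_velocity (Ys j) X) \<le> MY / al + ?O * M" .
  qed (use ab assms C0 O0 MY[of _] in \<open>auto simp: MY_def sum_nonneg\<close>)
qed

lemma thompson_family_velocity_lipschitz:
  fixes Ys :: "nat \<Rightarrow> real^'n^'n"
  assumes "finite J" "\<forall>j\<in>J. spd (Ys j)" "0 < c" "0 < M"
  obtains Lg where "0 \<le> Lg"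
    "\<And>j (X::real^'n^'n) X'. j \<in> J \<Longrightarrow> spd_within c M X \<Longrightarrow> spd_within c M X' \<Longrightarrow>
      norm (thompson_velocity (Ys j) X - thompson_velocity (Ys j) X') \<le> Lg * norm (X - X')"
proof -
  obtain al be where ab: "0 < al" "al \<le> 1" "1 \<le> be"
    "\<And>j (X::real^'n^'n). j \<in> J \<Longrightarrow> spd_within c M X \<Longrightarrow>
      al \<le> lmin (Ys j) X \<and> lmin (Ys j) X \<le> lmax (Ys j) X \<and> lmax (Ys j) X \<le> be"
    using family_spectral_bounds[OF assms] by blast
  define MY where "MY = (\<Sum>j\<in>J. norm (Ys j))"
  have MY: "norm (Ys j) \<le> MY" if "j \<in> J" for j
    using member_le_sum[of j J "\<lambda>j. norm (Ys j)"] that assms(1) by (simp add: MY_def)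
  have MY0: "0 \<le> MY" by (simp add: MY_def sum_nonneg)
  define La where "La = MY / c / c"
  let ?O = "ln_icept_bound al be"
  show ?thesis
  proof (rule that[of "2 * La / al^2 * MY + (2 / al + be / al^2) * (2 * La) * M + ?O"])
    fix j and X X' :: "real^'n^'n"
    assume j: "j \<in> J" and X: "spd_within c M X" and X': "spd_within c M X'"
    have "norm (Ys j) / c / c * norm (X - X') \<le> La * norm (X - X')"
      using MY[OF j] assms(3) by (simp add: La_def divide_right_mono mult_right_mono)
    hence lip: "\<bar>lmin (Ys j) X - lmin (Ys j) X'\<bar> \<le> La * norm (X - X')"
        "\<bar>lmax (Ys j) X - lmax (Ys j) X'\<bar> \<le> La * norm (X - X')"
      using lmin_lmax_lipschitz[of X c X' "Ys j"] X X' assms(2,3) j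
      by (fastforce simp: spd_within_def)+
    have "norm (thompson_velocity (Ys j) X - thompson_velocity (Ys j) X')
        \<le> (2 * La / al^2 * norm (Ys j) + (2 / al + be / al^2) * (2 * La) * norm X + ?O) * norm (X - X')"
      using thompson_velocity_lipschitz[of al "Ys j" X be X' La] ab(1) ab(4)[OF j X] ab(4)[OF j X'] lip
      by blast
    also have "\<dots> \<le> (2 * La / al^2 * MY + (2 / al + be / al^2) * (2 * La) * M + ?O) * norm (X - X')"
      using MY[OF j] X ab assms(3) MY0
      by (intro mult_right_mono add_mono mult_left_mono) (auto simp: spd_within_def La_def)
    finally show "norm (thompson_velocity (Ys j) X - thompson_velocity (Ys j) X')
        \<le> (2 * La / al^2 * MY + (2 / al + be / al^2) * (2 * La) * M + ?O) * norm (X - X')" .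
  qed (use ab assms MY0 in \<open>auto simp: La_def ln_icept_bound_def\<close>)
qed

lemma norm_le_of_expansion:
  fixes T X V :: "'a::real_normed_vector"
  assumes "norm (T - X - t *\<^sub>R V) \<le> C * t^2" "norm X \<le> M" "norm V \<le> B"
    and "0 \<le> t" "t \<le> 1" "0 \<le> C"
  shows "norm T \<le> M + B + C"
proof -
  have "norm T \<le> norm (X + t *\<^sub>R V) + norm (T - X - t *\<^sub>R V)"
    using norm_triangle_ineq[of "X + t *\<^sub>R V" "T - X - t *\<^sub>R V"] by simp
  also have "\<dots> \<le> norm X + norm (t *\<^sub>R V) + norm (T - X - t *\<^sub>R V)"
    using norm_triangle_ineq[of X "t *\<^sub>R V"] by simp
  finally have "norm T \<le> norm X + norm (t *\<^sub>R V) + norm (T - X - t *\<^sub>R V)" .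
  moreover have "norm (t *\<^sub>R V) \<le> 1 * B"
    unfolding norm_scaleR using assms(3-5) by (intro mult_mono) auto
  moreover have "C * t^2 \<le> C * 1"
    using assms(4-6) by (intro mult_left_mono) (auto simp: power_le_one)
  ultimately show ?thesis using assms(1,2) by linarith
qed

lemma thompson_family_spd_within:
  fixes Ys :: "nat \<Rightarrow> real^'n^'n"
  assumes "finite J" "\<forall>j\<in>J. spd (Ys j)" "0 < c" "0 < M"
  obtains c' M' where "0 < c'" "0 < M'"
    "\<And>j (X::real^'n^'n) (t::real). j \<in> J \<Longrightarrow> spd_within c M X \<Longrightarrow> 0 \<le> t \<Longrightarrow> t \<le> 1/2 \<Longrightarrow>
      spd_within c' M' (thompson X t (Ys j))"
proof -
  obtain al be where ab: "0 < al" "al \<le> 1" "1 \<le> be"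
    "\<And>j (X::real^'n^'n). j \<in> J \<Longrightarrow> spd_within c M X \<Longrightarrow>
      al \<le> lmin (Ys j) X \<and> lmin (Ys j) X \<le> lmax (Ys j) X \<and> lmax (Ys j) X \<le> be"
    using family_spectral_bounds[OF assms] by blast
  obtain Ce Bg where est: "0 \<le> Ce" "0 \<le> Bg"
    "\<And>j (X::real^'n^'n) (t::real). j \<in> J \<Longrightarrow> spd_within c M X \<Longrightarrow> 0 \<le> t \<Longrightarrow> t \<le> 1 \<Longrightarrow>
      norm (thompson X t (Ys j) - X - t *\<^sub>R thompson_velocity (Ys j) X) \<le> Ce * t^2"
    "\<And>j (X::real^'n^'n). j \<in> J \<Longrightarrow> spd_within c M X \<Longrightarrow> norm (thompson_velocity (Ys j) X) \<le> Bg"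
    using thompson_family_expansion[OF assms] by blast
  show ?thesis
  proof (rule that[of "c * al / 2" "M + Bg + Ce"])
    fix j and X :: "real^'n^'n" and t :: real
    assume j: "j \<in> J" and X: "spd_within c M X" and t: "0 \<le> t" "t \<le> 1/2"
    have Y: "spd (Ys j)" using assms(2) j by blast
    have "spd (thompson X t (Ys j))" "\<forall>x. c * al / 2 * (norm x)^2 \<le> quad_form (thompson X t (Ys j)) x"
      using spd_thompson[of X "Ys j" c al t] X Y assms(3) ab(1,2) ab(4)[OF j X] t
      by (auto simp: spd_within_def)
    moreover have "norm (thompson X t (Ys j)) \<le> M + Bg + Ce"
      using norm_le_of_expansion[OF est(3)[OF j X t(1)] _ est(4)[OF j X] t(1) _ est(1)] X t
      by (simp add: spd_within_def)
    ultimately show "spd_within (c * al / 2) (M + Bg + Ce) (thompson X t (Ys j))"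
      unfolding spd_within_def by blast
  qed (use assms(3,4) ab(1) est(1,2) in auto)
qed

section \<open>The sweep \<open>T\<^sub>p\<close>\<close>

text \<open>Within one sweep \<open>T\<^sub>p\<close> the iterates are inexact explicit Euler steps
  \<open>Z (i + 1) \<approx> Z i + t\<^sub>i G\<^sub>i (Z i)\<close>.\<close>

lemma perturbed_euler_drift:
  fixes Z :: "nat \<Rightarrow> 'a::real_normed_vector" and G :: "nat \<Rightarrow> 'a \<Rightarrow> 'a"
  assumes "\<And>i. i < m \<Longrightarrow> norm (Z (Suc i) - Z i - t i *\<^sub>R G i (Z i)) \<le> C * (t i)^2"
    and "\<And>i. i < m \<Longrightarrow> norm (G i (Z i)) \<le> B"
    and "\<And>i. i < m \<Longrightarrow> 0 \<le> t i \<and> t i \<le> v" and "v \<le> 1" and "0 \<le> C"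
  shows "norm (Z m - Z 0) \<le> real m * (B + C) * v"
  using assms
proof (induction m)
  case (Suc m)
  let ?S = "t m *\<^sub>R G m (Z m)" and ?E = "Z (Suc m) - Z m - t m *\<^sub>R G m (Z m)"
  have t: "0 \<le> t m" "t m \<le> v" using Suc.prems(3) by auto
  have "norm (Z (Suc m) - Z 0) \<le> norm ((Z m - Z 0) + ?S) + norm ?E"
    using norm_triangle_ineq[of "(Z m - Z 0) + ?S" ?E] by simp
  also have "\<dots> \<le> norm (Z m - Z 0) + norm ?S + norm ?E"
    using norm_triangle_ineq[of "Z m - Z 0" ?S] by simp
  also have "\<dots> \<le> real m * (B + C) * v + v * B + C * v"
  proof (intro add_mono)
    show "norm (Z m - Z 0) \<le> real m * (B + C) * v" using Suc by simp
    show "norm ?S \<le> v * B"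
      unfolding norm_scaleR using t Suc.prems(2)[of m] by (intro mult_mono) auto
    have "t m * t m \<le> v * 1" using t \<open>v \<le> 1\<close> by (intro mult_mono) auto
    hence "C * (t m)^2 \<le> C * v" using \<open>0 \<le> C\<close> by (simp add: power2_eq_square mult_left_mono)
    thus "norm ?E \<le> C * v" using Suc.prems(1)[of m] by simp
  qed
  finally show ?case by (simp add: algebra_simps)
qed simp

lemma perturbed_euler_first_order:
  fixes Z :: "nat \<Rightarrow> 'a::real_normed_vector" and G :: "nat \<Rightarrow> 'a \<Rightarrow> 'a"
  assumes "\<And>i. i < m \<Longrightarrow> norm (Z (Suc i) - Z i - t i *\<^sub>R G i (Z i)) \<le> C * (t i)^2"
    and "\<And>i. i < m \<Longrightarrow> norm (G i (Z 0)) \<le> B"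
    and "\<And>i. i < m \<Longrightarrow> norm (G i (Z i) - G i (Z 0)) \<le> L * norm (Z i - Z 0)"
    and "\<And>i. i < m \<Longrightarrow> norm (Z i - Z 0) \<le> R * v"
    and "\<And>i. i < m \<Longrightarrow> 0 \<le> t i \<and> t i \<le> v \<and> \<bar>t i - h\<bar> \<le> D * v^2"
    and "0 \<le> C" "0 \<le> L"
  shows "norm (Z m - Z 0 - h *\<^sub>R (\<Sum>i<m. G i (Z 0))) \<le> real m * (C + L * R + B * D) * v^2"
  using assms
proof (induction m)
  case (Suc m)
  let ?A = "Z m - Z 0 - h *\<^sub>R (\<Sum>i<m. G i (Z 0))"
  let ?E = "Z (Suc m) - Z m - t m *\<^sub>R G m (Z m)"
  let ?S = "t m *\<^sub>R (G m (Z m) - G m (Z 0))"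
  let ?H = "(t m - h) *\<^sub>R G m (Z 0)"
  have t: "0 \<le> t m" "t m \<le> v" "\<bar>t m - h\<bar> \<le> D * v^2" using Suc.prems(5) by auto
  have eq: "Z (Suc m) - Z 0 - h *\<^sub>R (\<Sum>i<Suc m. G i (Z 0)) = ?A + ?E + ?S + ?H"
    by (simp add: algebra_simps)
  have "norm (Z (Suc m) - Z 0 - h *\<^sub>R (\<Sum>i<Suc m. G i (Z 0)))
      \<le> norm ?A + norm ?E + norm ?S + norm ?H"
    unfolding eq using norm_triangle_ineq[of "?A + ?E + ?S" ?H] norm_triangle_ineq[of "?A + ?E" ?S]
      norm_triangle_ineq[of ?A ?E] by linarith
  also have "\<dots> \<le> real m * (C + L * R + B * D) * v^2 + C * v^2 + v * (L * (R * v)) + D * v^2 * B"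
  proof (intro add_mono)
    show "norm ?A \<le> real m * (C + L * R + B * D) * v^2" using Suc by simp
    have "C * (t m)^2 \<le> C * v^2" using t \<open>0 \<le> C\<close> by (intro mult_left_mono power_mono) auto
    thus "norm ?E \<le> C * v^2" using Suc.prems(1)[of m] by simp
    have "L * norm (Z m - Z 0) \<le> L * (R * v)"
      using Suc.prems(4)[of m] \<open>0 \<le> L\<close> by (intro mult_left_mono) auto
    hence "norm (G m (Z m) - G m (Z 0)) \<le> L * (R * v)" using Suc.prems(3)[of m] by simp
    thus "norm ?S \<le> v * (L * (R * v))"
      unfolding norm_scaleR using t by (intro mult_mono) auto
    show "norm ?H \<le> D * v^2 * B"
      unfolding norm_scaleR using t Suc.prems(2)[of m] by (intro mult_mono) auto
  qed
  also have "\<dots> = real (Suc m) * (C + L * R + B * D) * v^2"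
    by (simp add: algebra_simps power2_eq_square)
  finally show ?case .
qed simp

lemma jidx_eq: "1 \<le> k \<Longrightarrow> m < k \<Longrightarrow> jidx k (p * k + m + 1) = m + 1"
proof -
  assume "1 \<le> k" "m < k"
  hence "p * k + m + 1 + k - 1 = m + (p + 1) * k" by (simp add: algebra_simps)
  thus ?thesis using \<open>m < k\<close> by (simp add: jidx_def)
qed

lemma T_part_Suc_eq:
  assumes "1 \<le> k" "m < k"
  shows "T_part Ys k p (Suc m) X = thompson (T_part Ys k p m X) (1 / real (p * k + m + 2)) (Ys (Suc m))"
proof -
  have "T_part Ys k p (Suc m) X = thompson (T_part Ys k p m X) (1 / (real (p * k + m + 1) + 1)) (Ys (m + 1))"
    by (simp only: T_part.simps S_map_def jidx_eq[OF assms])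
  also have "real (p * k + m + 1) + 1 = real (p * k + m + 2)" by simp
  finally show ?thesis by simp
qed

lemma step_size_bounds:
  fixes p k m :: nat
  assumes "1 \<le> p" "m < k"
  defines "t \<equiv> 1 / real (p * k + m + 2)"
  shows "t \<le> 1 / real p" "\<bar>t - 1 / (real p * real k)\<bar> \<le> (real k + 1) * (1 / real p)^2"
proof -
  define P where "P = real p * real k"
  have t: "t = 1 / (P + real m + 2)" by (simp add: t_def P_def)
  have PK: "real p \<le> P" "0 < P" using assms by (simp_all add: P_def)
  show "t \<le> 1 / real p" unfolding t using PK assms by (intro frac_le) auto
  have "1 / P - t = (real m + 2) / (P * (P + real m + 2))"
    unfolding t using PK by (simp add: diff_frac_eq)
  moreover have "t \<le> 1 / P" unfolding t using PK by (intro frac_le) auto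
  moreover have "(real m + 2) / (P * (P + real m + 2)) \<le> (real k + 1) / (real p * real p)"
    using assms PK by (intro frac_le mult_mono) auto
  ultimately show "\<bar>t - 1 / (real p * real k)\<bar> \<le> (real k + 1) * (1 / real p)^2"
    by (simp add: P_def power2_eq_square)
qed

lemma T_part_spd_within:
  fixes Ys :: "nat \<Rightarrow> real^'n^'n"
  assumes "1 \<le> k" "\<forall>j\<in>{1..k}. spd (Ys j)" "0 < c" "0 < M" "\<forall>X\<in>A. spd_within c M X"
  obtains c' M' where "0 < c'" "0 < M'"
    "\<And>m p X. m \<le> k \<Longrightarrow> X \<in> A \<Longrightarrow> spd_within c' M' (T_part Ys k p m X)"
proof -
  have "\<exists>c' M'. 0 < c' \<and> 0 < M' \<and> (\<forall>m\<le>N. \<forall>p. \<forall>X\<in>A. spd_within c' M' (T_part Ys k p m X))"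
    if "N \<le> k" for N
    using that
  proof (induction N)
    case 0
    thus ?case using assms(3-5) by auto
  next
    case (Suc N)
    then obtain c1 M1 where cM1: "0 < c1" "0 < M1"
      "\<forall>m\<le>N. \<forall>p. \<forall>X\<in>A. spd_within c1 M1 (T_part Ys k p m X)" by auto
    obtain c2 M2 where cM2: "0 < c2" "0 < M2"
      "\<And>j (X::real^'n^'n) (t::real). j \<in> {1..k} \<Longrightarrow> spd_within c1 M1 X \<Longrightarrow> 0 \<le> t \<Longrightarrow> t \<le> 1/2 \<Longrightarrow>
        spd_within c2 M2 (thompson X t (Ys j))"
      using thompson_family_spd_within[of "{1..k}" Ys c1 M1] assms(2) cM1(1,2) by blast
    have "spd_within (min c1 c2) (max M1 M2) (T_part Ys k p m X)" if "m \<le> Suc N" "X \<in> A" for m p X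
    proof (cases "m \<le> N")
      case True
      hence "spd_within c1 M1 (T_part Ys k p m X)" using cM1(3) that(2) by blast
      thus ?thesis by (rule spd_within_mono) auto
    next
      case False
      hence m: "m = Suc N" using that(1) by simp
      have "1 / real (p * k + N + 2) \<le> 1 / 2" by (intro frac_le) auto
      hence "spd_within c2 M2 (thompson (T_part Ys k p N X) (1 / real (p * k + N + 2)) (Ys (Suc N)))"
        using cM1(3) cM2(3)[of "Suc N"] Suc.prems that(2) by simp
      thus ?thesis unfolding m T_part_Suc_eq[OF assms(1) Suc_le_lessD[OF Suc.prems]]
        by (rule spd_within_mono) auto
    qed
    thus ?case using cM1 cM2 by (intro exI[of _ "min c1 c2"] exI[of _ "max M1 M2"]) auto
  qed
  from this[of k] show ?thesis using that by blast
qed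

lemma T_map_euler_expansion:
  fixes Ys :: "nat \<Rightarrow> real^'n^'n" and G :: "nat \<Rightarrow> real^'n^'n \<Rightarrow> real^'n^'n"
  assumes "1 \<le> k" "1 \<le> p" "0 \<le> Ce" "0 \<le> Bg" "0 \<le> Lg"
    and reg: "\<And>m. m \<le> k \<Longrightarrow> R (T_part Ys k p m X)"
    and expansion: "\<And>j Z t. j \<in> {1..k} \<Longrightarrow> R Z \<Longrightarrow> 0 \<le> t \<Longrightarrow> t \<le> 1 \<Longrightarrow>
      norm (thompson Z t (Ys j) - Z - t *\<^sub>R G j Z) \<le> Ce * t^2"
    and bound: "\<And>j Z. j \<in> {1..k} \<Longrightarrow> R Z \<Longrightarrow> norm (G j Z) \<le> Bg"
    and lipschitz: "\<And>j Z Z'. j \<in> {1..k} \<Longrightarrow> R Z \<Longrightarrow> R Z' \<Longrightarrow> norm (G j Z - G j Z') \<le> Lg * norm (Z - Z')"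
  shows "norm (T_map Ys k p X - X - (1 / (real p * real k)) *\<^sub>R (\<Sum>j=1..k. G j X))
    \<le> real k * (Ce + Lg * (real k * (Bg + Ce)) + Bg * (real k + 1)) / (real p)^2"
proof -
  define Z where "Z i = T_part Ys k p i X" for i
  define t where "t i = 1 / real (p * k + i + 2)" for i
  let ?v = "1 / real p" and ?h = "1 / (real p * real k)"
  have tb: "0 \<le> t i \<and> t i \<le> ?v \<and> \<bar>t i - ?h\<bar> \<le> (real k + 1) * ?v^2" if "i < k" for i
    using step_size_bounds[OF assms(2) that] by (simp add: t_def)
  have v1: "?v \<le> 1" using assms(2) by simp
  have regZ: "R (Z i)" if "i \<le> k" for i using reg[OF that] by (simp add: Z_def)
  have Z0: "Z 0 = X" by (simp add: Z_def)
  have step: "norm (Z (Suc i) - Z i - t i *\<^sub>R G (Suc i) (Z i)) \<le> Ce * (t i)^2" if "i < k" for i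
  proof -
    have "Z (Suc i) = thompson (Z i) (t i) (Ys (Suc i))"
      unfolding Z_def t_def by (rule T_part_Suc_eq[OF assms(1) that])
    thus ?thesis using expansion[of "Suc i" "Z i" "t i"] regZ[of i] tb[OF that] v1 that by simp
  qed
  have drift: "norm (Z i - Z 0) \<le> real k * (Bg + Ce) * ?v" if "i < k" for i
  proof -
    have "norm (Z i - Z 0) \<le> real i * (Bg + Ce) * ?v"
      by (rule perturbed_euler_drift[where t = t and G = "\<lambda>i. G (Suc i)"])
        (use that step tb v1 assms(3) bound regZ in auto)
    also have "\<dots> \<le> real k * (Bg + Ce) * ?v" using that assms(3,4) by (intro mult_right_mono) auto
    finally show ?thesis .
  qed
  have "norm (Z k - Z 0 - ?h *\<^sub>R (\<Sum>i<k. G (Suc i) (Z 0)))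
      \<le> real k * (Ce + Lg * (real k * (Bg + Ce)) + Bg * (real k + 1)) * ?v^2"
    by (rule perturbed_euler_first_order[where t = t])
      (use step tb drift assms(3,5) bound lipschitz regZ[of 0] regZ Z0 in auto)
  thus ?thesis
    by (simp add: Z_def T_map_def power_divide sum.atLeast1_atMost_eq)
qed

lemma T_map_first_order:
  fixes Ys :: "nat \<Rightarrow> real^'n^'n"
  assumes "1 \<le> k" "\<forall>j\<in>{1..k}. spd (Ys j)" "0 < c" "0 < M" "\<forall>X\<in>A. spd_within c M X"
  obtains E Lg where "0 \<le> E" "0 \<le> Lg"
    "\<And>j X X'. j \<in> {1..k} \<Longrightarrow> X \<in> A \<Longrightarrow> X' \<in> A \<Longrightarrow>
      norm (thompson_velocity (Ys j) X - thompson_velocity (Ys j) X') \<le> Lg * norm (X - X')"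
    "\<And>X p. X \<in> A \<Longrightarrow> 1 \<le> p \<Longrightarrow> norm (T_map Ys k p X - X
        - (1 / (real p * real k)) *\<^sub>R (\<Sum>j=1..k. thompson_velocity (Ys j) X)) \<le> E / (real p)^2"
proof -
  obtain c1 M1 where cM1: "0 < c1" "0 < M1"
    "\<And>m p X. m \<le> k \<Longrightarrow> X \<in> A \<Longrightarrow> spd_within c1 M1 (T_part Ys k p m X)"
    using T_part_spd_within[OF assms] by blast
  obtain Ce Bg where est: "0 \<le> Ce" "0 \<le> Bg"
    "\<And>j (X::real^'n^'n) (t::real). j \<in> {1..k} \<Longrightarrow> spd_within c1 M1 X \<Longrightarrow> 0 \<le> t \<Longrightarrow> t \<le> 1 \<Longrightarrow>
      norm (thompson X t (Ys j) - X - t *\<^sub>R thompson_velocity (Ys j) X) \<le> Ce * t^2"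
    "\<And>j (X::real^'n^'n). j \<in> {1..k} \<Longrightarrow> spd_within c1 M1 X \<Longrightarrow> norm (thompson_velocity (Ys j) X) \<le> Bg"
    using thompson_family_expansion[of "{1..k}" Ys c1 M1] assms(2) cM1(1,2) by blast
  obtain Lg where lip: "0 \<le> Lg"
    "\<And>j (X::real^'n^'n) X'. j \<in> {1..k} \<Longrightarrow> spd_within c1 M1 X \<Longrightarrow> spd_within c1 M1 X' \<Longrightarrow>
      norm (thompson_velocity (Ys j) X - thompson_velocity (Ys j) X') \<le> Lg * norm (X - X')"
    using thompson_family_velocity_lipschitz[of "{1..k}" Ys c1 M1] assms(2) cM1(1,2) by blast
  have A: "spd_within c1 M1 X" if "X \<in> A" for X using cM1(3)[of 0 X] that by simp
  show ?thesis
  proof (rule that[OF _ lip(1)])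
    show "norm (T_map Ys k p X - X - (1 / (real p * real k)) *\<^sub>R (\<Sum>j=1..k. thompson_velocity (Ys j) X))
        \<le> real k * (Ce + Lg * (real k * (Bg + Ce)) + Bg * (real k + 1)) / (real p)^2"
      if "X \<in> A" "1 \<le> p" for X p
      by (rule T_map_euler_expansion[where R = "spd_within c1 M1"])
        (use assms(1) that cM1(3) est lip in auto)
  qed (use est lip A in auto)
qed

lemma T_map_near_fixed_point:
  fixes Ys :: "nat \<Rightarrow> real^'n^'n"
  assumes "1 \<le> k" "\<forall>j\<in>{1..k}. spd (Ys j)" "0 < c" "0 < M" "\<forall>X\<in>A. spd_within c M X"
    and "Xs \<in> A" "(\<Sum>j=1..k. thompson_velocity (Ys j) Xs) = 0"
  obtains E L where "0 \<le> E" "0 \<le> L"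
    "\<And>X p. X \<in> A \<Longrightarrow> 1 \<le> p \<Longrightarrow> norm (T_map Ys k p X - X) \<le> L / real p * norm (X - Xs) + E / (real p)^2"
proof -
  obtain E Lg where EL: "0 \<le> E" "0 \<le> Lg"
    "\<And>j X X'. j \<in> {1..k} \<Longrightarrow> X \<in> A \<Longrightarrow> X' \<in> A \<Longrightarrow>
      norm (thompson_velocity (Ys j) X - thompson_velocity (Ys j) X') \<le> Lg * norm (X - X')"
    "\<And>X p. X \<in> A \<Longrightarrow> 1 \<le> p \<Longrightarrow> norm (T_map Ys k p X - X
        - (1 / (real p * real k)) *\<^sub>R (\<Sum>j=1..k. thompson_velocity (Ys j) X)) \<le> E / (real p)^2"
    using T_map_first_order[OF assms(1-5)] by blast
  let ?F = "\<lambda>X. \<Sum>j=1..k. thompson_velocity (Ys j) X"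
  have F: "norm (?F X) \<le> real k * Lg * norm (X - Xs)" if "X \<in> A" for X
  proof -
    have "norm (?F X) = norm (\<Sum>j=1..k. thompson_velocity (Ys j) X - thompson_velocity (Ys j) Xs)"
      using assms(7) by (simp add: sum_subtractf)
    also have "\<dots> \<le> (\<Sum>j=1..k. Lg * norm (X - Xs))"
      using EL(3) that assms(6) by (intro order_trans[OF norm_sum] sum_mono) auto
    finally show ?thesis by simp
  qed
  show ?thesis
  proof (rule that[OF EL(1,2)])
    fix X and p :: nat assume X: "X \<in> A" and p: "1 \<le> p"
    have "norm ((1 / (real p * real k)) *\<^sub>R ?F X) \<le> \<bar>1 / (real p * real k)\<bar> * (real k * Lg * norm (X - Xs))"
      unfolding norm_scaleR using F[OF X] by (intro mult_left_mono) auto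
    also have "\<dots> = Lg / real p * norm (X - Xs)" using assms(1) by simp
    finally show "norm (T_map Ys k p X - X) \<le> Lg / real p * norm (X - Xs) + E / (real p)^2"
      using EL(4)[OF X p] norm_triangle_ineq[of "T_map Ys k p X - X - (1 / (real p * real k)) *\<^sub>R ?F X"
          "(1 / (real p * real k)) *\<^sub>R ?F X"] by simp
  qed
qed

lemma spd_nonzero: "spd (X::real^'n^'n) \<Longrightarrow> X \<noteq> 0"
proof
  assume "spd X" "X = 0"
  obtain x :: "real^'n" where "norm x = 1" using vector_choose_size[of 1] by auto
  hence "x \<noteq> 0" by auto
  hence "quad_form X x > 0" by (rule spd_quad_form_pos[OF \<open>spd X\<close>])
  thus False using \<open>X = 0\<close> by (simp add: quad_form_def)
qed

lemma abs_norm_div_minus_one_le: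
  assumes "norm X = n" "0 < n"
  shows "\<bar>norm Z / n - 1\<bar> \<le> norm (Z - X) / n"
proof -
  have "norm Z / n - 1 = (norm Z - norm X) / n" using assms by (simp add: diff_divide_distrib)
  hence "\<bar>norm Z / n - 1\<bar> = \<bar>norm Z - norm X\<bar> / n" using assms by (simp add: abs_divide)
  also have "\<dots> \<le> norm (Z - X) / n" using assms by (intro divide_right_mono norm_triangle_ineq3) auto
  finally show ?thesis .
qed

theorem lemma4p9:
  fixes Ys :: "nat \<Rightarrow> real^'n^'n" and k :: nat and Xs :: "real^'n^'n"
    and K :: "(real^'n^'n) set"
  assumes "k \<ge> 1"
    and "\<forall>j\<in>{1..k}. spd (Ys j)"
    and "spd Xs"
    and "(\<Sum>j=1..k. m_coef Ys j Xs *\<^sub>R Ys j) + (\<Sum>j=1..k. o_coef Ys j Xs) *\<^sub>R Xs = 0"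
    and "K \<subseteq> {X. spd X \<and> norm X = norm Xs}"
    and "compact K"
    and "Xs \<in> K"
  shows "\<exists>I L. I > 0 \<and> L > 0 \<and>
    (\<forall>Xh\<in>K. \<forall>p::nat. p \<ge> 1 \<longrightarrow>
      \<bar>norm (T_map Ys k p Xh) / norm Xs - 1\<bar> \<le> L / real p * norm (Xh - Xs) + I / (real p)^2)"
proof -
  obtain c where c: "0 < c" "\<forall>X\<in>K. \<forall>x. c * (norm x)^2 \<le> quad_form X x"
    using compact_spd_uniformly_positive[OF assms(6)] assms(5) by blast
  have n: "0 < norm Xs" using spd_nonzero[OF assms(3)] by simp
  have K: "\<forall>X\<in>K. spd_within c (norm Xs) X" using assms(5) c(2) by (auto simp: spd_within_def)
  have "(\<Sum>j=1..k. thompson_velocity (Ys j) Xs) = 0"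
    using assms(2-4) by (simp add: thompson_velocity_eq_coef sum.distrib scaleR_sum_left)
  then obtain E L where EL: "0 \<le> E" "0 \<le> L"
    "\<And>X p. X \<in> K \<Longrightarrow> 1 \<le> p \<Longrightarrow> norm (T_map Ys k p X - X) \<le> L / real p * norm (X - Xs) + E / (real p)^2"
    using T_map_near_fixed_point[OF assms(1,2) c(1) n K assms(7)] by blast
  show ?thesis
  proof (rule exI[of _ "(E + 1) / norm Xs"], rule exI[of _ "(L + 1) / norm Xs"], intro conjI ballI allI impI)
    fix Xh and p :: nat assume Xh: "Xh \<in> K" and p: "1 \<le> p"
    have "\<bar>norm (T_map Ys k p Xh) / norm Xs - 1\<bar> \<le> norm (T_map Ys k p Xh - Xh) / norm Xs"
      using Xh assms(5) n by (intro abs_norm_div_minus_one_le) auto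
    also have "\<dots> \<le> ((L + 1) / real p * norm (Xh - Xs) + (E + 1) / (real p)^2) / norm Xs"
      using EL(3)[OF Xh p] n p
      by (smt (verit) divide_right_mono mult_right_mono norm_ge_zero of_nat_0_le_iff zero_le_power2)
    also have "\<dots> = (L + 1) / norm Xs / real p * norm (Xh - Xs) + (E + 1) / norm Xs / (real p)^2"
      using n p by (simp add: field_simps)
    finally show "\<bar>norm (T_map Ys k p Xh) / norm Xs - 1\<bar>
        \<le> (L + 1) / norm Xs / real p * norm (Xh - Xs) + (E + 1) / norm Xs / (real p)^2" .
  qed (use n EL in auto)
qed

end
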